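(* Let $p$ be a power series with infinite radius of convergence and define $r_1(x)=-\frac1c\big((a+bx)p(x)+\frac12c^2p'(x)\big)$ and $r_2(x)=\frac1c\int_0^xp(y)dy$, which have infinite radius of convergence. Then for any continuously differentiable $h:[0,T]\to\mathbb{C}$ and $t\le T$, \[ \int_t^Th(s)p(X_s)dW_s=\int_t^T\big(h(s)r_1(X_s)-h'(s)r_2(X_s)\big)ds+h(T)r_2(X_T)-h(t)r_2(X_t). \]
   Context: $W$ is a Brownian motion, $a,b\in\mathbb{R}$, $c\ne0$, $T>0$, and $X$ solves $dX_t=(a+bX_t)dt+c\,dW_t$, $X_0\in\mathbb{R}$. *)

theory Defs
  imports "HOL-Probability.Probability"
begin

text \<open>Standard one-dimensional Brownian motion on a probability space M
  (time parameter t \<ge> 0; values at negative times are irrelevant).\<close>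
definition brownian_motion :: "'a measure \<Rightarrow> (real \<Rightarrow> 'a \<Rightarrow> real) \<Rightarrow> bool" where
  "brownian_motion M W \<longleftrightarrow>
     prob_space M \<and>
     (\<forall>t\<ge>0. W t \<in> borel_measurable M) \<and>
     (\<forall>\<omega>\<in>space M. W 0 \<omega> = 0 \<and> continuous_on {0..} (\<lambda>t. W t \<omega>)) \<and>
     (\<forall>s t. 0 \<le> s \<and> s < t \<longrightarrow>
        distributed M lborel (\<lambda>\<omega>. W t \<omega> - W s \<omega>)
          (\<lambda>x. ennreal (normal_density 0 (sqrt (t - s)) x))) \<and>
     (\<forall>(ts :: nat \<Rightarrow> real) n. 0 \<le> ts 0 \<and> (\<forall>i<n. ts i < ts (Suc i)) \<longrightarrow>
        prob_space.indep_vars M (\<lambda>_. borel) (\<lambda>i \<omega>. W (ts (Suc i)) \<omega> - W (ts i) \<omega>) {..<n})"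

definition is_partition :: "(nat \<Rightarrow> real) \<Rightarrow> nat \<Rightarrow> real \<Rightarrow> real \<Rightarrow> bool" where
  "is_partition \<tau> n t T \<longleftrightarrow> \<tau> 0 = t \<and> \<tau> n = T \<and> (\<forall>i<n. \<tau> i < \<tau> (Suc i))"

definition ito_sum ::
  "(real \<Rightarrow> 'a \<Rightarrow> real) \<Rightarrow> (real \<Rightarrow> 'a \<Rightarrow> complex) \<Rightarrow> (nat \<Rightarrow> real) \<Rightarrow> nat \<Rightarrow> 'a \<Rightarrow> complex" where
  "ito_sum W H \<tau> n \<omega> = (\<Sum>i<n. H (\<tau> i) \<omega> * complex_of_real (W (\<tau> (Suc i)) \<omega> - W (\<tau> i) \<omega>))"

text \<open>I is the Ito integral of the (continuous, adapted) integrand H over [t,T] w.r.t. W: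
  the left-point Riemann sums converge to I in probability as the mesh tends to 0.\<close>
definition has_ito_integral ::
  "'a measure \<Rightarrow> (real \<Rightarrow> 'a \<Rightarrow> real) \<Rightarrow> (real \<Rightarrow> 'a \<Rightarrow> complex) \<Rightarrow> real \<Rightarrow> real \<Rightarrow> ('a \<Rightarrow> complex) \<Rightarrow> bool" where
  "has_ito_integral M W H t T I \<longleftrightarrow>
     I \<in> borel_measurable M \<and> (\<forall>s\<in>{t..T}. H s \<in> borel_measurable M) \<and>
     (\<forall>\<epsilon>>0. \<exists>\<delta>>0. \<forall>\<tau> n. is_partition \<tau> n t T \<and> (\<forall>i<n. \<tau> (Suc i) - \<tau> i < \<delta>) \<longrightarrow>
        measure M {\<omega>\<in>space M. \<epsilon> \<le> cmod (ito_sum W H \<tau> n \<omega> - I \<omega>)} \<le> \<epsilon>)"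

definition pseries :: "(nat \<Rightarrow> complex) \<Rightarrow> real \<Rightarrow> complex" where
  "pseries \<alpha> x = (\<Sum>n. \<alpha> n * complex_of_real x ^ n)"

end

(*
  Put f = r2, so that c f' = p and c f'' = p'. On a step [s, u] of a partition, Taylor's formula for
  h f(X), together with X u - X s = (integral of a + b X over [s, u]) + c (W u - W s), gives

    h u f(X u) - h s f(X s) = integral over [s, u] of (h' f(X) + h L f(X))
                              + h s c f'(X s) (W u - W s) + c^2/2 h s f''(X s) ((W u - W s)^2 - (u - s))
                              + error,

  where L f = (a + b x) f' + c^2/2 f'' = - r1, and the error is at most eps ((u - s) + (W u - W s)^2)
  as soon as the path is bounded and W oscillates little. Summed over the partition, the errors are
  controlled by eps times (T - t) plus the quadratic variation sum, which is bounded in probability.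
  The correction term, the sum of h f''(X) ((W u - W s)^2 - (u - s)), tends to 0 in probability:
  freezing the weight h f''(X) on finitely many coarse blocks costs eps times the sum of the absolute
  defects, and on each block Chebyshev's inequality applies because the defects are independent and
  centred with variance 2 (u - s)^2. All bad events are described through rational times, which makes
  them measurable.
*)

theory Submission
  imports Defs
begin

section \<open>Entire power series\<close>

lemma summable_entire_powser:
  fixes f :: "nat \<Rightarrow> 'a::{banach,real_normed_div_algebra}"
  shows "conv_radius f = \<infinity> \<Longrightarrow> summable (\<lambda>n. f n * z ^ n)"
  by (rule summable_in_conv_radius) simp

lemma conv_radius_diffs_infinite:
  fixes f :: "nat \<Rightarrow> 'a::{real_normed_field,banach}"
  shows "conv_radius f = \<infinity> \<Longrightarrow> conv_radius (diffs f) = \<infinity>"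
  by (intro conv_radius_inftyI'' termdiff_converges_all) (rule summable_entire_powser)

lemma conv_radius_cmult_infinite:
  fixes f :: "nat \<Rightarrow> 'a::{banach,real_normed_div_algebra}"
  shows "conv_radius f = \<infinity> \<Longrightarrow> conv_radius (\<lambda>n. k * f n) = \<infinity>"
  by (rule conv_radius_inftyI'') (simp add: mult.assoc summable_mult summable_entire_powser)

lemma pseries_cmult: "conv_radius \<alpha> = \<infinity> \<Longrightarrow> pseries (\<lambda>n. k * \<alpha> n) x = k * pseries \<alpha> x"
  unfolding pseries_def
  by (subst suminf_mult[symmetric]) (auto intro: summable_entire_powser simp: mult.assoc)

lemma has_vector_derivative_pseries:
  assumes "conv_radius \<alpha> = \<infinity>"
  shows "(pseries \<alpha> has_vector_derivative pseries (diffs \<alpha>) x) (at x within S)"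
proof -
  have "((\<lambda>z. \<Sum>n. \<alpha> n * z ^ n) has_field_derivative (\<Sum>n. diffs \<alpha> n * of_real x ^ n)) (at (of_real x))"
    using assms by (intro termdiffs_strong_converges_everywhere summable_entire_powser)
  from field_vector_diff_chain_at[OF has_vector_derivative_of_real[OF DERIV_ident] this]
  have "(pseries \<alpha> has_vector_derivative pseries (diffs \<alpha>) x) (at x)"
    by (simp add: pseries_def[abs_def] o_def)
  then show ?thesis by (rule has_vector_derivative_at_within)
qed

lemma vector_derivative_pseries:
  "conv_radius \<alpha> = \<infinity> \<Longrightarrow> vector_derivative (pseries \<alpha>) (at x) = pseries (diffs \<alpha>) x"
  by (intro vector_derivative_at has_vector_derivative_pseries)

lemma continuous_on_pseries: "conv_radius \<alpha> = \<infinity> \<Longrightarrow> continuous_on S (pseries \<alpha>)"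
  by (meson has_vector_derivative_continuous continuous_at_imp_continuous_on
      has_vector_derivative_pseries)

definition antideriv_coeffs :: "(nat \<Rightarrow> complex) \<Rightarrow> nat \<Rightarrow> complex" where
  "antideriv_coeffs \<alpha> n = (if n = 0 then 0 else \<alpha> (n - 1) / of_nat n)"

lemma diffs_antideriv_coeffs: "diffs (antideriv_coeffs \<alpha>) = \<alpha>"
  by (auto simp: diffs_def antideriv_coeffs_def fun_eq_iff simp del: of_nat_Suc)

lemma pseries_antideriv_coeffs_0: "pseries (antideriv_coeffs \<alpha>) 0 = 0"
proof -
  have "(\<lambda>n. antideriv_coeffs \<alpha> n * of_real 0 ^ n) = (\<lambda>n. 0)"
    by (auto simp: antideriv_coeffs_def)
  then show ?thesis by (simp add: pseries_def)
qed

lemma conv_radius_antideriv_coeffs: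
  assumes "conv_radius \<alpha> = \<infinity>"
  shows "conv_radius (antideriv_coeffs \<alpha>) = \<infinity>"
proof (rule conv_radius_inftyI'')
  fix z :: complex
  have "summable (\<lambda>n. norm z * norm (\<alpha> n * z ^ n))"
    using assms by (intro summable_mult abs_summable_in_conv_radius) simp
  then have "summable (\<lambda>n. antideriv_coeffs \<alpha> (Suc n) * z ^ Suc n)"
  proof (rule summable_comparison_test')
    fix n
    have "norm (antideriv_coeffs \<alpha> (Suc n) * z ^ Suc n) = norm z * norm (\<alpha> n * z ^ n) / Suc n"
      by (simp add: antideriv_coeffs_def norm_mult norm_divide norm_power del: of_nat_Suc)
    also have "\<dots> \<le> norm z * norm (\<alpha> n * z ^ n)"
      by (simp add: divide_le_eq mult_le_cancel_left1 mult_less_0_iff del: of_nat_Suc)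
    finally show "norm (antideriv_coeffs \<alpha> (Suc n) * z ^ Suc n) \<le> norm z * norm (\<alpha> n * z ^ n)" .
  qed
  then show "summable (\<lambda>n. antideriv_coeffs \<alpha> n * z ^ n)"
    by (subst summable_Suc_iff[symmetric]) simp
qed

lemma interval_integral_pseries:
  assumes "conv_radius \<alpha> = \<infinity>"
  shows "interval_lebesgue_integral lborel (ereal 0) (ereal x) (pseries \<alpha>)
           = pseries (antideriv_coeffs \<alpha>) x"
proof -
  have "\<And>y. (pseries (antideriv_coeffs \<alpha>) has_vector_derivative pseries \<alpha> y)
              (at y within {min 0 x..max 0 x})"
    using has_vector_derivative_pseries[OF conv_radius_antideriv_coeffs[OF assms]]
    by (simp add: diffs_antideriv_coeffs)
  from interval_integral_FTC_finite[OF continuous_on_pseries[OF assms] this]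
  show ?thesis by (simp add: pseries_antideriv_coeffs_0)
qed

lemma sums_shifted_powser:
  fixes f :: "nat \<Rightarrow> 'a::real_normed_field"
  assumes "summable (\<lambda>n. f n * z ^ n)"
  shows "(\<lambda>n. (if n = 0 then 0 else f (n - 1)) * z ^ n) sums (z * (\<Sum>n. f n * z ^ n))"
proof -
  have "(\<lambda>n. z * (f n * z ^ n)) sums (z * (\<Sum>n. f n * z ^ n))"
    using assms by (intro sums_mult summable_sums)
  then have "(\<lambda>n. (\<lambda>n. (if n = 0 then 0 else f (n - 1)) * z ^ n) (Suc n))
               sums (z * (\<Sum>n. f n * z ^ n) + 0)"
    by (simp add: algebra_simps)
  then show ?thesis by (subst (asm) sums_Suc_iff) simp
qed

lemma entire_pseries_cmult:
  assumes "conv_radius \<beta> = \<infinity>"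
  shows "\<exists>\<gamma>. conv_radius \<gamma> = \<infinity> \<and> (\<lambda>x. k * pseries \<beta> x) = pseries \<gamma>"
  using assms by (intro exI[of _ "\<lambda>n. k * \<beta> n"]) (auto simp: conv_radius_cmult_infinite pseries_cmult)

lemma entire_pseries_affine_diffs:
  fixes a b :: real and k :: complex
  assumes rad: "conv_radius \<alpha> = \<infinity>"
  shows "\<exists>\<beta>. conv_radius \<beta> = \<infinity>
    \<and> (\<lambda>x. of_real (a + b * x) * pseries \<alpha> x + k * pseries (diffs \<alpha>) x) = pseries \<beta>"
proof -
  define \<beta> where "\<beta> = (\<lambda>n. of_real a * \<alpha> n + of_real b * (if n = 0 then 0 else \<alpha> (n - 1)) + k * diffs \<alpha> n)"
  have sums: "(\<lambda>n. \<beta> n * z ^ n) sums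
      (of_real a * (\<Sum>n. \<alpha> n * z ^ n) + of_real b * (z * (\<Sum>n. \<alpha> n * z ^ n))
         + k * (\<Sum>n. diffs \<alpha> n * z ^ n))" for z
  proof -
    have "(\<lambda>n. of_real a * (\<alpha> n * z ^ n) + of_real b * ((if n = 0 then 0 else \<alpha> (n - 1)) * z ^ n)
            + k * (diffs \<alpha> n * z ^ n)) sums
          (of_real a * (\<Sum>n. \<alpha> n * z ^ n) + of_real b * (z * (\<Sum>n. \<alpha> n * z ^ n))
            + k * (\<Sum>n. diffs \<alpha> n * z ^ n))"
      using summable_entire_powser[OF rad] summable_entire_powser[OF conv_radius_diffs_infinite[OF rad]]
      by (intro sums_add sums_mult summable_sums sums_shifted_powser)
    then show ?thesis by (simp add: \<beta>_def algebra_simps)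
  qed
  show ?thesis
  proof (intro exI conjI)
    show "conv_radius \<beta> = \<infinity>"
      using sums by (intro conv_radius_inftyI'') (auto simp: sums_iff)
    show "(\<lambda>x. of_real (a + b * x) * pseries \<alpha> x + k * pseries (diffs \<alpha>) x) = pseries \<beta>"
      using sums by (simp add: fun_eq_iff pseries_def sums_iff algebra_simps)
  qed
qed

section \<open>Quadratic variation of Brownian motion along a partition\<close>

lemma partition_le:
  assumes "\<forall>i<n. \<tau> i < \<tau> (Suc i)" "i \<le> j" "j \<le> n"
  shows "(\<tau> i :: real) \<le> \<tau> j"
  by (rule lift_Suc_mono_le_ivl[of "{..<n}"]) (use assms in \<open>auto intro: less_imp_le\<close>)

lemma partition_range:
  assumes "is_partition \<tau> n t T" "i \<le> n"
  shows "\<tau> i \<in> {t..T}"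
  using assms partition_le[of n \<tau> 0 i] partition_le[of n \<tau> i n] by (auto simp: is_partition_def)

lemma distributed_normal_moments:
  assumes "prob_space M" and D: "distributed M lborel X (\<lambda>x. ennreal (normal_density 0 (sqrt d) x))"
    and "d > 0"
  shows "integrable M (\<lambda>\<omega>. X \<omega> ^ 2)" "integrable M (\<lambda>\<omega>. X \<omega> ^ 4)"
    "(\<integral>\<omega>. X \<omega> ^ 2 \<partial>M) = d" "(\<integral>\<omega>. X \<omega> ^ 4 \<partial>M) = 3 * d\<^sup>2"
proof -
  have s: "sqrt d > 0" using \<open>d > 0\<close> by simp
  have i: "integrable lborel (\<lambda>x. normal_density 0 (sqrt d) x * (x - 0) ^ (2 * k))" for k
    by (rule integrable_normal_moment[OF s])
  show "integrable M (\<lambda>\<omega>. X \<omega> ^ 2)" "integrable M (\<lambda>\<omega>. X \<omega> ^ 4)"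
    using distributed_integrable[OF D, of "\<lambda>x. x ^ 2"] distributed_integrable[OF D, of "\<lambda>x. x ^ 4"]
      i[of 1] i[of 2] by simp_all
  show "(\<integral>\<omega>. X \<omega> ^ 2 \<partial>M) = d" "(\<integral>\<omega>. X \<omega> ^ 4 \<partial>M) = 3 * d\<^sup>2"
    using distributed_integral[OF D, of "\<lambda>x. x ^ 2"] distributed_integral[OF D, of "\<lambda>x. x ^ 4"]
      integral_normal_moment_even[OF s, of 0 1] integral_normal_moment_even[OF s, of 0 2] \<open>d > 0\<close>
    by (simp_all add: fact_numeral power2_eq_square field_simps)
qed

definition qv_defect :: "(real \<Rightarrow> real) \<Rightarrow> (nat \<Rightarrow> real) \<Rightarrow> nat \<Rightarrow> real" where
  "qv_defect w \<tau> i = (w (\<tau> (Suc i)) - w (\<tau> i))\<^sup>2 - (\<tau> (Suc i) - \<tau> i)"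

text \<open>The defects of Brownian motion over disjoint intervals are independent and centred, so
  only the diagonal terms survive; these are \<open>2 (\<tau> (Suc i) - \<tau> i)\<^sup>2\<close> by the fourth normal moment.\<close>

lemma brownian_qv_defect_second_moment:
  assumes BM: "brownian_motion M W" and t0: "0 \<le> \<tau> 0" and inc: "\<forall>i<n. \<tau> i < \<tau> (Suc i)"
    and S: "S \<subseteq> {..<n}"
  shows "integrable M (\<lambda>\<omega>. (\<Sum>i\<in>S. qv_defect (\<lambda>s. W s \<omega>) \<tau> i)\<^sup>2)"
    and "(\<integral>\<omega>. (\<Sum>i\<in>S. qv_defect (\<lambda>s. W s \<omega>) \<tau> i)\<^sup>2 \<partial>M) = (\<Sum>i\<in>S. 2 * (\<tau> (Suc i) - \<tau> i)\<^sup>2)"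
proof -
  define Y where "Y = (\<lambda>i \<omega>. qv_defect (\<lambda>s. W s \<omega>) \<tau> i)"
  interpret prob_space M using BM by (simp add: brownian_motion_def)
  define D where "D = (\<lambda>i \<omega>. W (\<tau> (Suc i)) \<omega> - W (\<tau> i) \<omega>)"
  have Y_D: "Y i = (\<lambda>\<omega>. (D i \<omega>)\<^sup>2 - (\<tau> (Suc i) - \<tau> i))" for i
    by (simp add: Y_def D_def qv_defect_def)
  have fin: "finite S" using S finite_subset by blast
  have "0 \<le> \<tau> i" if "i < n" for i
    using partition_le[OF inc, of 0 i] that t0 by simp
  then have distr: "distributed M lborel (D i) (\<lambda>x. ennreal (normal_density 0 (sqrt (\<tau> (Suc i) - \<tau> i)) x))"
    if "i < n" for i
    using BM inc that unfolding brownian_motion_def D_def by auto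
  have dpos: "\<tau> (Suc i) - \<tau> i > 0" if "i < n" for i using inc that by auto
  note mom = distributed_normal_moments[OF prob_space_axioms distr dpos]
  have Y_int: "integrable M (Y i)" if "i < n" for i
    unfolding Y_D using mom(1)[OF that that] by auto
  have Y_mean: "(\<integral>\<omega>. Y i \<omega> \<partial>M) = 0" if "i < n" for i
    unfolding Y_D using mom(1,3)[OF that that] by (simp add: prob_space)
  have Y_sq: "(\<lambda>\<omega>. Y i \<omega> * Y i \<omega>) =
      (\<lambda>\<omega>. D i \<omega> ^ 4 - 2 * (\<tau> (Suc i) - \<tau> i) * (D i \<omega>)\<^sup>2 + (\<tau> (Suc i) - \<tau> i)\<^sup>2)" for i
    unfolding Y_D by (auto simp: fun_eq_iff power2_eq_square power4_eq_xxxx algebra_simps)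
  have ind: "indep_vars (\<lambda>_. borel) D {..<n}"
    using BM t0 inc unfolding brownian_motion_def D_def by blast
  have indep: "indep_var borel (Y i) borel (Y j)" if "i < n" "j < n" "i \<noteq> j" for i j
  proof -
    have "indep_var borel ((\<lambda>f. (f i)\<^sup>2 - (\<tau> (Suc i) - \<tau> i)) \<circ> (\<lambda>\<omega>. restrict (\<lambda>i. D i \<omega>) {i}))
        borel ((\<lambda>f. (f j)\<^sup>2 - (\<tau> (Suc j) - \<tau> j)) \<circ> (\<lambda>\<omega>. restrict (\<lambda>i. D i \<omega>) {j}))"
      using that by (intro indep_var_compose[OF indep_var_restrict[OF ind]]) auto
    then show ?thesis by (simp add: Y_D o_def)
  qed
  have Y_prod: "integrable M (\<lambda>\<omega>. Y i \<omega> * Y j \<omega>)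
      \<and> (\<integral>\<omega>. Y i \<omega> * Y j \<omega> \<partial>M) = (if i = j then 2 * (\<tau> (Suc i) - \<tau> i)\<^sup>2 else 0)"
    if "i < n" "j < n" for i j
  proof (cases "i = j")
    case True
    have "integrable M (\<lambda>\<omega>. Y i \<omega> * Y i \<omega>)
        \<and> (\<integral>\<omega>. Y i \<omega> * Y i \<omega> \<partial>M) = 2 * (\<tau> (Suc i) - \<tau> i)\<^sup>2"
      unfolding Y_sq using mom[OF that(1) that(1)] by (simp add: prob_space power2_eq_square)
    then show ?thesis using True by simp
  next
    case False
    then show ?thesis
      using indep_var_lebesgue_integral[OF indep[OF that False] Y_int Y_int]
        indep_var_integrable[OF indep[OF that False] Y_int Y_int] Y_mean that by simp
  qed
  have sq: "(\<lambda>\<omega>. (\<Sum>i\<in>S. Y i \<omega>)\<^sup>2) = (\<lambda>\<omega>. \<Sum>i\<in>S. \<Sum>j\<in>S. Y i \<omega> * Y j \<omega>)"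
    by (simp add: power2_eq_square sum_product)
  have "integrable M (\<lambda>\<omega>. (\<Sum>i\<in>S. Y i \<omega>)\<^sup>2)"
    unfolding sq using Y_prod S by (intro Bochner_Integration.integrable_sum) auto
  then show "integrable M (\<lambda>\<omega>. (\<Sum>i\<in>S. qv_defect (\<lambda>s. W s \<omega>) \<tau> i)\<^sup>2)"
    by (simp add: Y_def)
  have "(\<integral>\<omega>. (\<Sum>i\<in>S. Y i \<omega>)\<^sup>2 \<partial>M) = (\<Sum>i\<in>S. \<Sum>j\<in>S. (\<integral>\<omega>. Y i \<omega> * Y j \<omega> \<partial>M))"
    unfolding sq using Y_prod S
    by (subst Bochner_Integration.integral_sum; auto intro!: Bochner_Integration.integrable_sum
        sum.cong Bochner_Integration.integral_sum)
  also have "\<dots> = (\<Sum>i\<in>S. \<Sum>j\<in>S. (if i = j then 2 * (\<tau> (Suc i) - \<tau> i)\<^sup>2 else 0))"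
    using Y_prod S by (intro sum.cong refl) (metis lessThan_iff subsetD)
  also have "\<dots> = (\<Sum>i\<in>S. 2 * (\<tau> (Suc i) - \<tau> i)\<^sup>2)"
    using fin by (simp add: sum.delta)
  finally show "(\<integral>\<omega>. (\<Sum>i\<in>S. qv_defect (\<lambda>s. W s \<omega>) \<tau> i)\<^sup>2 \<partial>M) = (\<Sum>i\<in>S. 2 * (\<tau> (Suc i) - \<tau> i)\<^sup>2)"
    by (simp add: Y_def)
qed

lemma brownian_qv_defect_tail:
  assumes BM: "brownian_motion M W" and t0: "0 \<le> \<tau> 0" and inc: "\<forall>i<n. \<tau> i < \<tau> (Suc i)"
    and S: "S \<subseteq> {..<n}" and \<eta>: "\<eta> > 0" and mesh: "\<forall>i<n. \<tau> (Suc i) - \<tau> i \<le> \<delta>"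
  shows "{\<omega>\<in>space M. \<eta> \<le> \<bar>\<Sum>i\<in>S. qv_defect (\<lambda>s. W s \<omega>) \<tau> i\<bar>} \<in> sets M"
    and "measure M {\<omega>\<in>space M. \<eta> \<le> \<bar>\<Sum>i\<in>S. qv_defect (\<lambda>s. W s \<omega>) \<tau> i\<bar>} \<le> 2 * \<delta> * (\<tau> n - \<tau> 0) / \<eta>\<^sup>2"
proof -
  define Y where "Y = (\<lambda>i \<omega>. qv_defect (\<lambda>s. W s \<omega>) \<tau> i)"
  interpret prob_space M using BM by (simp add: brownian_motion_def)
  have "W (\<tau> i) \<in> borel_measurable M" if "i \<le> n" for i
    using BM partition_le[OF inc, of 0 i] that t0 by (simp add: brownian_motion_def)
  then have meas: "(\<lambda>\<omega>. \<Sum>i\<in>S. Y i \<omega>) \<in> borel_measurable M"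
    unfolding Y_def qv_defect_def using S
    by (intro borel_measurable_sum borel_measurable_diff borel_measurable_power) auto
  then show "{\<omega>\<in>space M. \<eta> \<le> \<bar>\<Sum>i\<in>S. qv_defect (\<lambda>s. W s \<omega>) \<tau> i\<bar>} \<in> sets M"
    unfolding Y_def by measurable
  have "measure M {\<omega>\<in>space M. \<eta> \<le> \<bar>\<Sum>i\<in>S. Y i \<omega>\<bar>} \<le> (\<integral>\<omega>. (\<Sum>i\<in>S. Y i \<omega>)\<^sup>2 \<partial>M) / \<eta>\<^sup>2"
    using brownian_qv_defect_second_moment(1)[OF BM t0 inc S] \<eta> unfolding Y_def
    by (intro second_moment_method meas[unfolded Y_def])
  also have "\<dots> = (\<Sum>i\<in>S. 2 * (\<tau> (Suc i) - \<tau> i)\<^sup>2) / \<eta>\<^sup>2"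
    using brownian_qv_defect_second_moment(2)[OF BM t0 inc S] by (simp add: Y_def)
  also have "\<dots> \<le> (\<Sum>i<n. 2 * \<delta> * (\<tau> (Suc i) - \<tau> i)) / \<eta>\<^sup>2"
  proof (intro divide_right_mono)
    have "(\<Sum>i\<in>S. 2 * (\<tau> (Suc i) - \<tau> i)\<^sup>2) \<le> (\<Sum>i<n. 2 * (\<tau> (Suc i) - \<tau> i)\<^sup>2)"
      using S by (intro sum_mono2) auto
    also have "\<dots> \<le> (\<Sum>i<n. 2 * \<delta> * (\<tau> (Suc i) - \<tau> i))"
      using inc mesh
      by (intro sum_mono) (auto simp: power2_eq_square intro!: mult_right_mono less_imp_le)
    finally show "(\<Sum>i\<in>S. 2 * (\<tau> (Suc i) - \<tau> i)\<^sup>2) \<le> (\<Sum>i<n. 2 * \<delta> * (\<tau> (Suc i) - \<tau> i))" .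
  qed simp
  also have "(\<Sum>i<n. 2 * \<delta> * (\<tau> (Suc i) - \<tau> i)) = 2 * \<delta> * (\<tau> n - \<tau> 0)"
    by (simp add: sum_distrib_left[symmetric] sum_lessThan_telescope)
  finally show "measure M {\<omega>\<in>space M. \<eta> \<le> \<bar>\<Sum>i\<in>S. qv_defect (\<lambda>s. W s \<omega>) \<tau> i\<bar>}
      \<le> 2 * \<delta> * (\<tau> n - \<tau> 0) / \<eta>\<^sup>2" by (simp add: Y_def)
qed

lemma brownian_qv_bad_event:
  fixes \<kappa> :: "nat \<Rightarrow> nat" and m :: nat
  assumes BM: "brownian_motion M W" and "0 \<le> t" and P: "is_partition \<tau> n t T"
    and mesh: "\<forall>i<n. \<tau> (Suc i) - \<tau> i \<le> \<delta>" and "\<theta> > 0"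
  defines "E \<equiv> {\<omega>\<in>space M. 1 \<le> \<bar>\<Sum>i<n. qv_defect (\<lambda>s. W s \<omega>) \<tau> i\<bar>
      \<or> (\<exists>k<m. \<theta> \<le> \<bar>\<Sum>i\<in>{i. i < n \<and> \<kappa> i = k}. qv_defect (\<lambda>s. W s \<omega>) \<tau> i\<bar>)}"
  shows "E \<in> sets M" "measure M E \<le> 2 * \<delta> * (T - t) * (1 + m / \<theta>\<^sup>2)"
proof -
  interpret prob_space M using BM by (simp add: brownian_motion_def)
  have t0: "0 \<le> \<tau> 0" and inc: "\<forall>i<n. \<tau> i < \<tau> (Suc i)" and ends: "\<tau> n - \<tau> 0 = T - t"
    using P \<open>0 \<le> t\<close> by (auto simp: is_partition_def)
  define A where "A = {\<omega>\<in>space M. 1 \<le> \<bar>\<Sum>i<n. qv_defect (\<lambda>s. W s \<omega>) \<tau> i\<bar>}"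
  define B where "B = (\<lambda>k. {\<omega>\<in>space M. \<theta> \<le> \<bar>\<Sum>i\<in>{i. i < n \<and> \<kappa> i = k}. qv_defect (\<lambda>s. W s \<omega>) \<tau> i\<bar>})"
  have E: "E = A \<union> (\<Union>k<m. B k)" by (auto simp: E_def A_def B_def)
  note tail = brownian_qv_defect_tail[OF BM t0 inc _ _ mesh]
  have A: "A \<in> sets M" "measure M A \<le> 2 * \<delta> * (T - t)"
    using tail[of "{..<n}" 1] ends by (simp_all add: A_def)
  have B: "B k \<in> sets M" "measure M (B k) \<le> 2 * \<delta> * (T - t) / \<theta>\<^sup>2" for k
    using tail[of "{i. i < n \<and> \<kappa> i = k}" \<theta>] \<open>\<theta> > 0\<close> ends by (auto simp: B_def)
  show "E \<in> sets M" unfolding E using A B by auto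
  have "measure M E \<le> measure M A + measure M (\<Union>k<m. B k)"
    unfolding E using A B by (intro measure_Un_le) auto
  also have "\<dots> \<le> 2 * \<delta> * (T - t) + (\<Sum>k<m. 2 * \<delta> * (T - t) / \<theta>\<^sup>2)"
    using A B by (intro add_mono order_trans[OF finite_measure_subadditive_finite sum_mono]) auto
  also have "\<dots> = 2 * \<delta> * (T - t) * (1 + m / \<theta>\<^sup>2)"
    using \<open>\<theta> > 0\<close> by (simp add: field_simps)
  finally show "measure M E \<le> 2 * \<delta> * (T - t) * (1 + m / \<theta>\<^sup>2)" .
qed

section \<open>Continuous processes sampled at rational times\<close>

lemma closure_rationals_in_interval:
  "T > 0 \<Longrightarrow> closure ({0..T} \<inter> \<rat>) = {0..T::real}"
  by (subst closure_convex_Int_superset) (auto simp: Rats_closure_real)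

lemma continuous_on_bound_from_rationals:
  fixes f :: "real \<Rightarrow> real"
  assumes "T > 0" "continuous_on {0..T} f" "\<forall>s\<in>{0..T} \<inter> \<rat>. \<bar>f s\<bar> \<le> K"
  shows "\<forall>s\<in>{0..T}. \<bar>f s\<bar> \<le> K"
proof -
  have "closed {s\<in>{0..T}. \<bar>f s\<bar> \<le> K}"
    using assms(2) by (intro continuous_on_closed_Collect_le continuous_intros) auto
  then have "closure ({0..T} \<inter> \<rat>) \<subseteq> {s\<in>{0..T}. \<bar>f s\<bar> \<le> K}"
    using assms(3) by (intro closure_minimal) auto
  then show ?thesis using closure_rationals_in_interval[OF assms(1)] by auto
qed

lemma continuous_on_oscillation_from_rationals:
  fixes f :: "real \<Rightarrow> real"
  assumes T: "T > 0" and f: "continuous_on {0..T} f"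
    and osc: "\<forall>s\<in>{0..T} \<inter> \<rat>. \<forall>s'\<in>{0..T} \<inter> \<rat>. \<bar>s - s'\<bar> \<le> \<rho> \<longrightarrow> \<bar>f s - f s'\<bar> \<le> \<eta>"
    and v: "v \<in> {0..T}" "v' \<in> {0..T}" "\<bar>v - v'\<bar> < \<rho>"
  shows "\<bar>f v - f v'\<bar> \<le> \<eta>"
proof -
  obtain r r' where r: "\<And>n. r n \<in> {0..T} \<inter> \<rat>" "r \<longlonglongrightarrow> v"
    and r': "\<And>n. r' n \<in> {0..T} \<inter> \<rat>" "r' \<longlonglongrightarrow> v'"
    using v(1,2) closure_rationals_in_interval[OF T] by (metis closure_sequential)
  have "(\<lambda>n. \<bar>f (r n) - f (r' n)\<bar>) \<longlonglongrightarrow> \<bar>f v - f v'\<bar>"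
    using continuous_on_tendsto_compose[OF f r(2) v(1)] continuous_on_tendsto_compose[OF f r'(2) v(2)]
      r(1) r'(1) by (intro tendsto_rabs tendsto_diff) auto
  moreover have "eventually (\<lambda>n. \<bar>r n - r' n\<bar> < \<rho>) sequentially"
    using order_tendstoD(2)[OF tendsto_rabs[OF tendsto_diff[OF r(2) r'(2)]] v(3)] .
  then have "eventually (\<lambda>n. \<bar>f (r n) - f (r' n)\<bar> \<le> \<eta>) sequentially"
    by eventually_elim (use osc r(1) r'(1) in auto)
  ultimately show ?thesis by (rule tendsto_upperbound) simp
qed

lemma (in finite_measure) decseq_Inter_empty_measure_small:
  assumes "range A \<subseteq> sets M" "decseq A" "(\<Inter>k. A k) = {}" "\<epsilon> > 0"
  shows "\<exists>k. measure M (A k) < \<epsilon>"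
proof -
  have "(\<lambda>k. measure M (A k)) \<longlonglongrightarrow> 0"
    using finite_Lim_measure_decseq[OF assms(1,2)] assms(3) by simp
  from order_tendstoD(2)[OF this assms(4)] show ?thesis
    by (auto simp: eventually_sequentially)
qed

text \<open>The suprema below are taken over rational times only, so that the events are measurable.\<close>

lemma (in prob_space) continuous_process_bound_event:
  fixes Y :: "real \<Rightarrow> 'a \<Rightarrow> real"
  assumes meas: "\<forall>s\<in>{0..T}. Y s \<in> borel_measurable M"
    and cont: "\<forall>\<omega>\<in>space M. continuous_on {0..T} (\<lambda>s. Y s \<omega>)" and "\<epsilon> > 0"
  shows "\<exists>K. {\<omega>\<in>space M. \<exists>s\<in>{0..T} \<inter> \<rat>. K < \<bar>Y s \<omega>\<bar>} \<in> sets M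
      \<and> measure M {\<omega>\<in>space M. \<exists>s\<in>{0..T} \<inter> \<rat>. K < \<bar>Y s \<omega>\<bar>} \<le> \<epsilon>"
proof -
  define A where "A = (\<lambda>k::nat. {\<omega>\<in>space M. \<exists>s\<in>{0..T} \<inter> \<rat>. real k < \<bar>Y s \<omega>\<bar>})"
  have sets: "{\<omega>\<in>space M. \<exists>s\<in>{0..T} \<inter> \<rat>. K < \<bar>Y s \<omega>\<bar>} \<in> sets M" for K
  proof (rule sets.sets_Collect_countable_Ex')
    fix s assume "s \<in> {0..T} \<inter> \<rat>"
    then have [measurable]: "Y s \<in> borel_measurable M" using meas by auto
    show "{\<omega>\<in>space M. K < \<bar>Y s \<omega>\<bar>} \<in> sets M" by measurable
  qed (simp add: countable_rat)
  have "(\<Inter>k. A k) = {}"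
  proof (safe elim!: equalityE)
    fix \<omega> assume w: "\<omega> \<in> (\<Inter>k. A k)"
    then have "\<omega> \<in> space M" by (auto simp: A_def)
    then have "compact ((\<lambda>s. Y s \<omega>) ` {0..T})"
      using cont by (intro compact_continuous_image) auto
    then obtain B where B: "\<forall>s\<in>{0..T}. \<bar>Y s \<omega>\<bar> \<le> B"
      by (auto dest!: compact_imp_bounded simp: bounded_iff)
    obtain k :: nat where k: "B < real k" using reals_Archimedean2 by blast
    from w have "\<omega> \<in> A k" by blast
    then obtain s where s: "s \<in> {0..T}" "real k < \<bar>Y s \<omega>\<bar>" by (auto simp: A_def)
    show "\<omega> \<in> {}" using B[rule_format, OF s(1)] s(2) k by linarith
  qed
  moreover have "decseq A" unfolding A_def decseq_def by force
  moreover have "range A \<subseteq> sets M" using sets by (auto simp: A_def)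
  ultimately obtain k where "measure M (A k) < \<epsilon>"
    using decseq_Inter_empty_measure_small \<open>\<epsilon> > 0\<close> by blast
  then show ?thesis using sets unfolding A_def by (intro exI[of _ "real k"]) auto
qed

lemma (in prob_space) continuous_process_oscillation_event:
  fixes Y :: "real \<Rightarrow> 'a \<Rightarrow> real"
  assumes meas: "\<forall>s\<in>{0..T}. Y s \<in> borel_measurable M"
    and cont: "\<forall>\<omega>\<in>space M. continuous_on {0..T} (\<lambda>s. Y s \<omega>)" and "\<epsilon> > 0" and "\<eta> > 0"
  shows "\<exists>\<rho>>0. {\<omega>\<in>space M. \<exists>s\<in>{0..T} \<inter> \<rat>. \<exists>s'\<in>{0..T} \<inter> \<rat>. \<bar>s - s'\<bar> \<le> \<rho> \<and> \<eta> < \<bar>Y s \<omega> - Y s' \<omega>\<bar>} \<in> sets M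
      \<and> measure M {\<omega>\<in>space M. \<exists>s\<in>{0..T} \<inter> \<rat>. \<exists>s'\<in>{0..T} \<inter> \<rat>. \<bar>s - s'\<bar> \<le> \<rho> \<and> \<eta> < \<bar>Y s \<omega> - Y s' \<omega>\<bar>} \<le> \<epsilon>"
proof -
  define E where "E = (\<lambda>\<rho>. {\<omega>\<in>space M. \<exists>s\<in>{0..T} \<inter> \<rat>. \<exists>s'\<in>{0..T} \<inter> \<rat>. \<bar>s - s'\<bar> \<le> \<rho> \<and> \<eta> < \<bar>Y s \<omega> - Y s' \<omega>\<bar>})"
  define A where "A = (\<lambda>k::nat. E (1 / Suc k))"
  have sets: "E \<rho> \<in> sets M" for \<rho>
    unfolding E_def
  proof (intro sets.sets_Collect_countable_Ex' countable_Int2 countable_rat)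
    fix s s' assume "s \<in> {0..T} \<inter> \<rat>" "s' \<in> {0..T} \<inter> \<rat>"
    then have [measurable]: "Y s \<in> borel_measurable M" "Y s' \<in> borel_measurable M" using meas by auto
    show "{\<omega>\<in>space M. \<bar>s - s'\<bar> \<le> \<rho> \<and> \<eta> < \<bar>Y s \<omega> - Y s' \<omega>\<bar>} \<in> sets M" by measurable
  qed
  have "(\<Inter>k. A k) = {}"
  proof (safe elim!: equalityE)
    fix \<omega> assume w: "\<omega> \<in> (\<Inter>k. A k)"
    then have "\<omega> \<in> space M" by (auto simp: A_def E_def)
    then have "uniformly_continuous_on {0..T} (\<lambda>s. Y s \<omega>)"
      using cont by (intro compact_uniformly_continuous) auto
    then obtain d where d: "d > 0" "\<forall>s\<in>{0..T}. \<forall>s'\<in>{0..T}. dist s' s < d \<longrightarrow> dist (Y s' \<omega>) (Y s \<omega>) < \<eta>"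
      unfolding uniformly_continuous_on_def using \<open>\<eta> > 0\<close> by metis
    obtain k :: nat where k: "1 / Suc k < d" using nat_approx_posE d(1) by blast
    from w have "\<omega> \<in> A k" by blast
    then obtain s s' where s: "s \<in> {0..T}" "s' \<in> {0..T}" "\<bar>s - s'\<bar> \<le> 1 / Suc k"
      and big: "\<eta> < \<bar>Y s \<omega> - Y s' \<omega>\<bar>"
      by (auto simp: A_def E_def)
    have "\<bar>Y s \<omega> - Y s' \<omega>\<bar> < \<eta>"
      using d(2) s k by (force simp: dist_real_def abs_minus_commute)
    with big show "\<omega> \<in> {}" by linarith
  qed
  moreover have "decseq A"
  proof (rule decseq_SucI)
    fix k
    have "1 / real (Suc (Suc k)) \<le> 1 / real (Suc k)" by (simp add: frac_le)
    then show "A (Suc k) \<subseteq> A k" unfolding A_def E_def by force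
  qed
  moreover have "range A \<subseteq> sets M" using sets by (auto simp: A_def)
  ultimately obtain k where "measure M (A k) < \<epsilon>"
    using decseq_Inter_empty_measure_small \<open>\<epsilon> > 0\<close> by blast
  then show ?thesis using sets unfolding A_def E_def by (intro exI[of _ "1 / Suc k"]) auto
qed

section \<open>Deterministic estimates\<close>

lemma continuous_on_compact_norm_bound:
  fixes f :: "'a::topological_space \<Rightarrow> 'b::real_normed_vector"
  assumes "continuous_on S f" "compact S"
  obtains B where "B \<ge> 0" "\<forall>x\<in>S. norm (f x) \<le> B"
proof -
  have "bounded (f ` S)" by (rule compact_imp_bounded[OF compact_continuous_image[OF assms]])
  then show ?thesis using that by (auto simp: bounded_pos intro: less_imp_le)
qed

lemma continuous_on_compact_modulus:
  fixes f :: "real \<Rightarrow> 'b::real_normed_vector"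
  assumes "continuous_on S f" "compact S" "e > 0"
  obtains d where "d > 0" "\<forall>x\<in>S. \<forall>y\<in>S. \<bar>x - y\<bar> < d \<longrightarrow> norm (f x - f y) \<le> e"
proof -
  have "uniformly_continuous_on S f" by (rule compact_uniformly_continuous[OF assms(1,2)])
  then obtain d where "d > 0" "\<forall>x\<in>S. \<forall>x'\<in>S. dist x' x < d \<longrightarrow> dist (f x') (f x) < e"
    unfolding uniformly_continuous_on_def using assms(3) by metis
  then show ?thesis by (intro that[of d]) (auto simp: dist_norm intro!: less_imp_le)
qed

lemma norm_mult_diff_le:
  fixes x x' y y' :: "'a::real_normed_algebra"
  assumes "norm (x - x') \<le> \<epsilon>" "norm (y - y') \<le> \<epsilon>" "norm y \<le> B" "norm x' \<le> B'"
  shows "norm (x * y - x' * y') \<le> \<epsilon> * B + B' * \<epsilon>"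
proof -
  have "norm (x * y - x' * y') = norm ((x - x') * y + x' * (y - y'))"
    by (simp add: algebra_simps)
  also have "\<dots> \<le> norm (x - x') * norm y + norm x' * norm (y - y')"
    by (intro order_trans[OF norm_triangle_ineq] add_mono norm_mult_ineq)
  also have "\<dots> \<le> \<epsilon> * B + B' * \<epsilon>"
    using assms by (intro add_mono mult_mono) (auto intro: order_trans[OF norm_ge_zero])
  finally show ?thesis .
qed

lemma norm_diff_le_vector_derivative_bound:
  fixes f :: "real \<Rightarrow> 'b::real_normed_vector"
  assumes "convex S" "\<And>z. z \<in> S \<Longrightarrow> (f has_vector_derivative f' z) (at z within S)"
    and "\<And>z. z \<in> S \<Longrightarrow> norm (f' z) \<le> B" and "x \<in> S" "y \<in> S"
  shows "norm (f x - f y) \<le> B * \<bar>x - y\<bar>"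
proof -
  have "norm (f x - f y) \<le> B * norm (x - y)"
  proof (rule differentiable_bound[OF assms(1) _ _ assms(4,5)])
    fix z assume z: "z \<in> S"
    show "(f has_derivative (\<lambda>h. h *\<^sub>R f' z)) (at z within S)"
      using assms(2)[OF z] by (simp add: has_vector_derivative_def)
    show "onorm (\<lambda>h. h *\<^sub>R f' z) \<le> B"
      using assms(3)[OF z] by (simp add: onorm_scaleR_left[OF bounded_linear_ident] onorm_id)
  qed
  then show ?thesis by simp
qed

lemma taylor2_remainder_bound:
  fixes f f' f'' :: "real \<Rightarrow> 'b::real_normed_algebra_1"
  assumes f: "\<And>y. (f has_vector_derivative f' y) (at y)"
    and f': "\<And>y. (f' has_vector_derivative f'' y) (at y)"
    and B: "\<And>z. z \<in> {min y0 y1..max y0 y1} \<Longrightarrow> norm (f'' z - f'' y0) \<le> B"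
  shows "norm (f y1 - f y0 - of_real (y1 - y0) * f' y0 - of_real ((y1 - y0)\<^sup>2 / 2) * f'' y0)
           \<le> B * (y1 - y0)\<^sup>2"
proof -
  define S where "S = {min y0 y1..max y0 y1}"
  have S: "convex S" "y0 \<in> S" "y1 \<in> S" unfolding S_def by auto
  define \<psi> where "\<psi> = (\<lambda>z. f' z - f' y0 - of_real (z - y0) * f'' y0)"
  define \<phi> where "\<phi> = (\<lambda>z. f z - f y0 - of_real (z - y0) * f' y0 - of_real ((z - y0)\<^sup>2 / 2) * f'' y0)"
  have lin: "((\<lambda>z. z - y0) has_real_derivative 1) (at z within S)" for z
    by (auto intro!: derivative_eq_intros)
  have sq: "((\<lambda>z. (z - y0)\<^sup>2 / 2) has_real_derivative (z - y0)) (at z within S)" for z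
    by (auto intro!: derivative_eq_intros)
  have \<psi>_deriv: "(\<psi> has_vector_derivative (f'' z - f'' y0)) (at z within S)" for z
    unfolding \<psi>_def
    by (rule has_vector_derivative_eq_rhs[OF has_vector_derivative_diff[OF
          has_vector_derivative_diff[OF has_vector_derivative_at_within[OF f'] has_vector_derivative_const]
          has_vector_derivative_mult_left[OF has_vector_derivative_of_real[OF lin]]]]) simp
  have \<psi>_bound: "norm (\<psi> z) \<le> B * \<bar>z - y0\<bar>" if "z \<in> S" for z
  proof -
    have "norm (\<psi> z - \<psi> y0) \<le> B * \<bar>z - y0\<bar>"
      by (rule norm_diff_le_vector_derivative_bound[OF S(1) \<psi>_deriv _ that S(2)]) (use B in \<open>auto simp: S_def\<close>)
    then show ?thesis by (simp add: \<psi>_def)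
  qed
  have \<phi>_deriv: "(\<phi> has_vector_derivative \<psi> z) (at z within S)" for z
    unfolding \<phi>_def \<psi>_def
    by (rule has_vector_derivative_eq_rhs[OF has_vector_derivative_diff[OF has_vector_derivative_diff[OF
          has_vector_derivative_diff[OF has_vector_derivative_at_within[OF f] has_vector_derivative_const]
          has_vector_derivative_mult_left[OF has_vector_derivative_of_real[OF lin]]]
          has_vector_derivative_mult_left[OF has_vector_derivative_of_real[OF sq]]]]) simp
  have "norm (\<phi> y1 - \<phi> y0) \<le> (B * \<bar>y1 - y0\<bar>) * \<bar>y1 - y0\<bar>"
  proof (rule norm_diff_le_vector_derivative_bound[OF S(1) \<phi>_deriv _ S(3,2)])
    fix z assume z: "z \<in> S"
    have "\<bar>z - y0\<bar> \<le> \<bar>y1 - y0\<bar>" "B \<ge> 0"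
      using z B[of y0] unfolding S_def by auto
    then show "norm (\<psi> z) \<le> B * \<bar>y1 - y0\<bar>"
      using \<psi>_bound[OF z] by (meson mult_left_mono order_trans)
  qed
  then show ?thesis by (simp add: \<phi>_def power2_eq_square mult.assoc)
qed

lemma integral_partition_sum:
  fixes f :: "real \<Rightarrow> 'a::banach"
  assumes inc: "\<forall>i<n. \<tau> i < \<tau> (Suc i)" and f: "f integrable_on {\<tau> 0..\<tau> n}"
  shows "(\<Sum>i<n. integral {\<tau> i..\<tau> (Suc i)} f) = integral {\<tau> 0..\<tau> n} f"
  using inc f
proof (induction n)
  case (Suc n)
  have "\<tau> 0 \<le> \<tau> n" "\<tau> n \<le> \<tau> (Suc n)"
    using partition_le[OF Suc.prems(1), of 0 n] Suc.prems(1) by auto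
  moreover from this have "f integrable_on {\<tau> 0..\<tau> n}"
    by (intro integrable_subinterval_real[OF Suc.prems(2)]) auto
  ultimately show ?case
    using Suc Henstock_Kurzweil_Integration.integral_combine[of "\<tau> 0" "\<tau> n" "\<tau> (Suc n)" f] by simp
qed simp

lemma left_riemann_sum_error:
  fixes f :: "real \<Rightarrow> 'a::banach"
  assumes f: "continuous_on {t..T} f" and e: "e > 0"
  obtains d where "d > 0" "\<And>\<tau> n. is_partition \<tau> n t T \<Longrightarrow> \<forall>i<n. \<tau> (Suc i) - \<tau> i < d \<Longrightarrow>
      norm ((\<Sum>i<n. (\<tau> (Suc i) - \<tau> i) *\<^sub>R f (\<tau> i)) - integral {t..T} f) \<le> e * (T - t)"
proof -
  obtain d where d: "d > 0" "\<forall>x\<in>{t..T}. \<forall>y\<in>{t..T}. \<bar>x - y\<bar> < d \<longrightarrow> norm (f x - f y) \<le> e"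
    using continuous_on_compact_modulus[OF f _ e] by blast
  have "norm ((\<Sum>i<n. (\<tau> (Suc i) - \<tau> i) *\<^sub>R f (\<tau> i)) - integral {t..T} f) \<le> e * (T - t)"
    if P: "is_partition \<tau> n t T" and mesh: "\<forall>i<n. \<tau> (Suc i) - \<tau> i < d" for \<tau> n
  proof -
    have inc: "\<forall>i<n. \<tau> i < \<tau> (Suc i)" and ends: "\<tau> 0 = t" "\<tau> n = T"
      using P by (auto simp: is_partition_def)
    have sub: "{\<tau> i..\<tau> (Suc i)} \<subseteq> {t..T}" if "i < n" for i
      using partition_range[OF P, of i] partition_range[OF P, of "Suc i"] that by auto
    have fc: "continuous_on {\<tau> i..\<tau> (Suc i)} f" if "i < n" for i
      using continuous_on_subset[OF f sub[OF that]] .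
    have piece: "(\<tau> (Suc i) - \<tau> i) *\<^sub>R f (\<tau> i) - integral {\<tau> i..\<tau> (Suc i)} f
        = integral {\<tau> i..\<tau> (Suc i)} (\<lambda>v. f (\<tau> i) - f v)" if "i < n" for i
      using integral_diff[OF integrable_const_ivl integrable_continuous_interval[OF fc[OF that]]] inc[rule_format, OF that] by simp
    have "integral {t..T} f = (\<Sum>i<n. integral {\<tau> i..\<tau> (Suc i)} f)"
      using integral_partition_sum[OF inc, of f] integrable_continuous_interval[OF f] ends by simp
    then have "norm ((\<Sum>i<n. (\<tau> (Suc i) - \<tau> i) *\<^sub>R f (\<tau> i)) - integral {t..T} f)
        \<le> (\<Sum>i<n. norm (integral {\<tau> i..\<tau> (Suc i)} (\<lambda>v. f (\<tau> i) - f v)))"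
      by (simp add: sum_subtractf[symmetric] piece norm_sum)
    also have "\<dots> \<le> (\<Sum>i<n. e * (\<tau> (Suc i) - \<tau> i))"
    proof (intro sum_mono integral_bound)
      fix i v assume i: "i \<in> {..<n}" and v: "v \<in> {\<tau> i..\<tau> (Suc i)}"
      then show "norm (f (\<tau> i) - f v) \<le> e"
        using d(2) sub[of i] mesh by auto
    qed (use inc fc in \<open>auto intro!: continuous_on_diff less_imp_le\<close>)
    also have "\<dots> = e * (T - t)"
      by (simp add: sum_distrib_left[symmetric] sum_lessThan_telescope ends)
    finally show ?thesis .
  qed
  with d(1) show ?thesis using that by blast
qed

lemma borel_measurable_integral_continuous:
  fixes F :: "real \<Rightarrow> 'a \<Rightarrow> 'b::{banach,second_countable_topology}"
  assumes "t \<le> T" and meas: "\<forall>s\<in>{t..T}. F s \<in> borel_measurable M"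
    and cont: "\<forall>\<omega>\<in>space M. continuous_on {t..T} (\<lambda>s. F s \<omega>)"
  shows "(\<lambda>\<omega>. integral {t..T} (\<lambda>s. F s \<omega>)) \<in> borel_measurable M"
proof (cases "t = T")
  case False
  then have tT: "t < T" using \<open>t \<le> T\<close> by simp
  define \<tau> where "\<tau> = (\<lambda>N i. t + real i * (T - t) / real (Suc N))"
  have step: "\<tau> N (Suc i) - \<tau> N i = (T - t) / real (Suc N)" for N i
    unfolding \<tau>_def by (simp add: diff_divide_distrib[symmetric] algebra_simps)
  have P: "is_partition (\<tau> N) (Suc N) t T" for N
    using tT unfolding is_partition_def
    by (auto simp: \<tau>_def intro!: divide_strict_right_mono mult_strict_right_mono)
  define R where "R = (\<lambda>N \<omega>. \<Sum>i<Suc N. (\<tau> N (Suc i) - \<tau> N i) *\<^sub>R F (\<tau> N i) \<omega>)"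
  show ?thesis
  proof (rule borel_measurable_LIMSEQ_metric)
    show "R N \<in> borel_measurable M" for N
      unfolding R_def using meas partition_range[OF P]
      by (intro borel_measurable_sum borel_measurable_scaleR borel_measurable_const) auto
    fix \<omega> assume "\<omega> \<in> space M"
    show "(\<lambda>N. R N \<omega>) \<longlonglongrightarrow> integral {t..T} (\<lambda>s. F s \<omega>)"
    proof (rule LIMSEQ_I)
      fix e :: real assume "e > 0"
      then obtain d where d: "d > 0" "\<And>\<tau> n. is_partition \<tau> n t T \<Longrightarrow> \<forall>i<n. \<tau> (Suc i) - \<tau> i < d \<Longrightarrow>
          norm ((\<Sum>i<n. (\<tau> (Suc i) - \<tau> i) *\<^sub>R F (\<tau> i) \<omega>) - integral {t..T} (\<lambda>s. F s \<omega>))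
            \<le> e / (2 * (T - t)) * (T - t)"
        using left_riemann_sum_error[OF cont[rule_format, OF \<open>\<omega> \<in> space M\<close>], of "e / (2 * (T - t))"] tT
        by auto
      obtain N0 where N0: "(T - t) / d < real N0" using reals_Archimedean2 by blast
      have "norm (R N \<omega> - integral {t..T} (\<lambda>s. F s \<omega>)) < e" if "N \<ge> N0" for N
      proof -
        have "(T - t) / d < real (Suc N)" using N0 that by simp
        then have "(T - t) / real (Suc N) < d" using d(1) by (simp add: field_simps)
        then have "norm (R N \<omega> - integral {t..T} (\<lambda>s. F s \<omega>)) \<le> e / (2 * (T - t)) * (T - t)"
          unfolding R_def using d(2)[OF P] step by simp
        also have "\<dots> = e / 2" using tT by (simp add: field_simps)
        also have "\<dots> < e" using \<open>e > 0\<close> by simp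
        finally show ?thesis .
      qed
      then show "\<exists>N0. \<forall>N\<ge>N0. norm (R N \<omega> - integral {t..T} (\<lambda>s. F s \<omega>)) < e" by blast
    qed
  qed
qed simp

lemma norm_sum_blocks_le:
  fixes g z :: "nat \<Rightarrow> 'a::real_normed_algebra_1" and Y :: "nat \<Rightarrow> real"
  assumes "\<forall>i<n. \<kappa> i < m" "\<forall>i<n. norm (g i - z (\<kappa> i)) \<le> \<epsilon>" "\<forall>k<m. norm (z k) \<le> G"
  shows "norm (\<Sum>i<n. g i * of_real (Y i))
           \<le> \<epsilon> * (\<Sum>i<n. \<bar>Y i\<bar>) + G * (\<Sum>k<m. \<bar>\<Sum>i\<in>{i. i < n \<and> \<kappa> i = k}. Y i\<bar>)"
proof -
  define A where "A = (\<Sum>i<n. (g i - z (\<kappa> i)) * of_real (Y i))"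
  define B where "B = (\<Sum>k<m. z k * of_real (\<Sum>i\<in>{i. i < n \<and> \<kappa> i = k}. Y i))"
  have "(\<Sum>i<n. z (\<kappa> i) * of_real (Y i))
      = (\<Sum>k<m. \<Sum>i\<in>{i \<in> {..<n}. \<kappa> i = k}. z (\<kappa> i) * of_real (Y i))"
    using assms(1) by (intro sum.group[symmetric]) auto
  also have "\<dots> = B"
    unfolding B_def of_real_sum by (auto simp: sum_distrib_left intro!: sum.cong)
  finally have split: "(\<Sum>i<n. g i * of_real (Y i)) = A + B"
    unfolding A_def by (simp add: sum_subtractf algebra_simps)
  have "norm A \<le> (\<Sum>i<n. \<epsilon> * \<bar>Y i\<bar>)"
    unfolding A_def
  proof (rule order_trans[OF norm_sum sum_mono])
    fix i assume "i \<in> {..<n}"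
    then show "norm ((g i - z (\<kappa> i)) * of_real (Y i)) \<le> \<epsilon> * \<bar>Y i\<bar>"
      using assms(2) by (auto intro!: order_trans[OF norm_mult_ineq] mult_right_mono)
  qed
  moreover have "norm B \<le> (\<Sum>k<m. G * \<bar>\<Sum>i\<in>{i. i < n \<and> \<kappa> i = k}. Y i\<bar>)"
    unfolding B_def
  proof (rule order_trans[OF norm_sum sum_mono])
    fix k assume "k \<in> {..<m}"
    then show "norm (z k * of_real (\<Sum>i\<in>{i. i < n \<and> \<kappa> i = k}. Y i))
        \<le> G * \<bar>\<Sum>i\<in>{i. i < n \<and> \<kappa> i = k}. Y i\<bar>"
      using assms(3) by (auto intro!: order_trans[OF norm_mult_ineq] mult_right_mono simp del: of_real_sum)
  qed
  ultimately show ?thesis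
    using norm_triangle_ineq[of A B] by (simp add: split sum_distrib_left)
qed

lemma uniform_blocks:
  assumes "t < T" "r > 0"
  obtains m :: nat and \<sigma> :: "nat \<Rightarrow> real" and \<kappa> :: "real \<Rightarrow> nat"
  where "m > 0" "\<forall>k<m. \<sigma> k \<in> {t..T}" "\<forall>s\<in>{t..<T}. \<kappa> s < m \<and> \<bar>s - \<sigma> (\<kappa> s)\<bar> < r"
proof
  define m where "m = nat \<lceil>(T - t) / r\<rceil> + 1"
  have "(T - t) / r < m"
    using real_nat_ceiling_ge[of "(T - t) / r"] unfolding m_def by linarith
  then have "T - t < m * r" using assms(2) by (simp add: divide_less_eq)
  then have m: "m > 0" "(T - t) / m < r"
    by (simp_all add: m_def divide_less_eq mult.commute)
  show "m > 0" by (fact m(1))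
  show "\<forall>k<m. t + real k * (T - t) / m \<in> {t..T}"
  proof (intro allI impI)
    fix k assume "k < m"
    then have "real k * (T - t) / m \<le> real m * (T - t) / m"
      using assms by (intro divide_right_mono mult_right_mono) auto
    then show "t + real k * (T - t) / m \<in> {t..T}" using m(1) assms by auto
  qed
  show "\<forall>s\<in>{t..<T}. nat \<lfloor>(s - t) * m / (T - t)\<rfloor> < m
      \<and> \<bar>s - (t + real (nat \<lfloor>(s - t) * m / (T - t)\<rfloor>) * (T - t) / m)\<bar> < r"
  proof
    fix s assume s: "s \<in> {t..<T}"
    define z where "z = (s - t) * m / (T - t)"
    have z: "0 \<le> z" "z < m" "s = t + z * (T - t) / m"
      using assms s m(1) by (auto simp: z_def field_simps)
    have k: "real (nat \<lfloor>z\<rfloor>) \<le> z" "z < real (nat \<lfloor>z\<rfloor>) + 1"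
      using z(1) by linarith+
    have "s - (t + real (nat \<lfloor>z\<rfloor>) * (T - t) / m) = (z - nat \<lfloor>z\<rfloor>) * ((T - t) / m)"
      using m(1) by (subst z(3)) (simp add: field_simps)
    then have "\<bar>s - (t + real (nat \<lfloor>z\<rfloor>) * (T - t) / m)\<bar> = (z - nat \<lfloor>z\<rfloor>) * ((T - t) / m)"
      using k(1) assms(1) by simp
    also have "\<dots> < 1 * r"
    proof (rule mult_strict_mono)
      show "z - nat \<lfloor>z\<rfloor> < 1" using k(2) by linarith
      show "0 \<le> (T - t) / m" using assms(1) by simp
    qed (use m(2) in auto)
    finally show "nat \<lfloor>z\<rfloor> < m \<and> \<bar>s - (t + real (nat \<lfloor>z\<rfloor>) * (T - t) / m)\<bar> < r"
      using k z(2) by linarith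
  qed
qed

section \<open>Ito's expansion along a path of the SDE\<close>

text \<open>In the application \<open>f = r2\<close>, so that \<open>c f' = p\<close> and \<open>r1 = - generator\<close>.\<close>

locale ito_expansion =
  fixes a b c T :: real and h h' f f' f'' :: "real \<Rightarrow> complex"
  assumes T_pos: "T > 0"
    and f_deriv: "\<And>y. (f has_vector_derivative f' y) (at y)"
    and f'_deriv: "\<And>y. (f' has_vector_derivative f'' y) (at y)"
    and f''_cont: "continuous_on UNIV f''"
    and h_deriv: "\<And>s. s \<in> {0..T} \<Longrightarrow> (h has_vector_derivative h' s) (at s within {0..T})"
    and h'_cont: "continuous_on {0..T} h'"
begin

definition generator :: "real \<Rightarrow> complex" where
  "generator y = of_real (a + b * y) * f' y + of_real (c\<^sup>2 / 2) * f'' y"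

lemma continuous_on_f [continuous_intros]: "continuous_on S g \<Longrightarrow> continuous_on S (\<lambda>v. f (g v))"
  by (rule continuous_on_compose2[of UNIV f])
     (auto intro: continuous_on_vector_derivative has_vector_derivative_at_within f_deriv)

lemma continuous_on_f' [continuous_intros]: "continuous_on S g \<Longrightarrow> continuous_on S (\<lambda>v. f' (g v))"
  by (rule continuous_on_compose2[of UNIV f'])
     (auto intro: continuous_on_vector_derivative has_vector_derivative_at_within f'_deriv)

lemma continuous_on_f'' [continuous_intros]: "continuous_on S g \<Longrightarrow> continuous_on S (\<lambda>v. f'' (g v))"
  by (rule continuous_on_compose2[OF f''_cont]) auto

lemma continuous_on_generator [continuous_intros]:
  "continuous_on S g \<Longrightarrow> continuous_on S (\<lambda>v. generator (g v))"
  unfolding generator_def by (intro continuous_intros)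

lemma continuous_on_h [continuous_intros]: "S \<subseteq> {0..T} \<Longrightarrow> continuous_on S h"
  using continuous_on_vector_derivative[OF h_deriv] continuous_on_subset by blast

lemma continuous_on_h' [continuous_intros]: "S \<subseteq> {0..T} \<Longrightarrow> continuous_on S h'"
  using h'_cont continuous_on_subset by blast

definition sde_path :: "(real \<Rightarrow> real) \<Rightarrow> (real \<Rightarrow> real) \<Rightarrow> bool" where
  "sde_path x w \<longleftrightarrow> continuous_on {0..T} x \<and>
     (\<forall>s\<in>{0..T}. \<forall>u\<in>{0..T}. s \<le> u \<longrightarrow> x u - x s = integral {s..u} (\<lambda>v. a + b * x v) + c * (w u - w s))"

text \<open>The defect of Ito's formula for \<open>h f(x)\<close> on \<open>[s, u]\<close> when the stochastic integrand is
  frozen at \<open>s\<close>; the last term compensates \<open>(w u - w s)\<^sup>2\<close> by \<open>u - s\<close>.\<close>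

definition local_error :: "(real \<Rightarrow> real) \<Rightarrow> (real \<Rightarrow> real) \<Rightarrow> real \<Rightarrow> real \<Rightarrow> complex" where
  "local_error x w s u =
     h s * (of_real c * f' (x s)) * of_real (w u - w s) - (h u * f (x u) - h s * f (x s))
     + integral {s..u} (\<lambda>v. h' v * f (x v) + h v * generator (x v))
     + of_real (c\<^sup>2 / 2) * (h s * f'' (x s)) * of_real ((w u - w s)\<^sup>2 - (u - s))"

lemma local_error_eq:
  fixes x w :: "real \<Rightarrow> real"
  assumes xc: "continuous_on {0..T} x" and su: "0 \<le> s" "s \<le> u" "u \<le> T"
    and incr: "x u - x s = integral {s..u} (\<lambda>v. a + b * x v) + c * (w u - w s)"
  defines "A \<equiv> integral {s..u} (\<lambda>v. a + b * x v)" and "D \<equiv> w u - w s"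
  shows "local_error x w s u =
      integral {s..u} (\<lambda>v. h' v * (f (x v) - f (x u)))
    + integral {s..u} (\<lambda>v. (h v * f' (x v) - h s * f' (x s)) * of_real (a + b * x v))
    + of_real (c\<^sup>2 / 2) * integral {s..u} (\<lambda>v. h v * f'' (x v) - h s * f'' (x s))
    - h s * f'' (x s) * of_real ((A\<^sup>2 + 2 * c * A * D) / 2)
    - h s * (f (x u) - f (x s) - of_real (x u - x s) * f' (x s) - of_real ((x u - x s)\<^sup>2 / 2) * f'' (x s))"
proof -
  have sub: "{s..u} \<subseteq> {0..T}" using su by auto
  have xc': "continuous_on {s..u} x" using continuous_on_subset[OF xc sub] .
  have int: "(g has_integral integral {s..u} g) {s..u}" if "continuous_on {s..u} g" for g :: "real \<Rightarrow> complex"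
    using that by (intro integrable_integral integrable_continuous_interval)
  define J1 where "J1 = integral {s..u} (\<lambda>v. h' v * f (x v))"
  define J2 where "J2 = integral {s..u} (\<lambda>v. h v * f' (x v) * of_real (a + b * x v))"
  define J3 where "J3 = integral {s..u} (\<lambda>v. h v * f'' (x v))"
  have i1: "((\<lambda>v. h' v * f (x v)) has_integral J1) {s..u}" unfolding J1_def
    using sub by (intro int continuous_intros xc')
  have i2: "((\<lambda>v. h v * f' (x v) * of_real (a + b * x v)) has_integral J2) {s..u}" unfolding J2_def
    using sub by (intro int continuous_intros xc')
  have i3: "((\<lambda>v. h v * f'' (x v)) has_integral J3) {s..u}" unfolding J3_def
    using sub by (intro int continuous_intros xc')
  have iA: "((\<lambda>v. complex_of_real (a + b * x v)) has_integral of_real A) {s..u}"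
    unfolding A_def
    by (intro has_integral_of_real integrable_integral integrable_continuous_interval continuous_intros xc')
  have ih: "(h' has_integral (h u - h s)) {s..u}"
    using su sub by (intro fundamental_theorem_of_calculus has_vector_derivative_within_subset[OF h_deriv]) auto
  have ic: "((\<lambda>v. k) has_integral (of_real (u - s) * k)) {s..u}" for k :: complex
    using has_integral_const_real[of k s u] su by (simp add: scaleR_conv_of_real)
  have e0: "integral {s..u} (\<lambda>v. h' v * f (x v) + h v * generator (x v)) = J1 + J2 + of_real (c\<^sup>2 / 2) * J3"
  proof (rule integral_unique)
    have "((\<lambda>v. h' v * f (x v) + h v * f' (x v) * of_real (a + b * x v)
        + of_real (c\<^sup>2 / 2) * (h v * f'' (x v))) has_integral J1 + J2 + of_real (c\<^sup>2 / 2) * J3) {s..u}"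
      by (intro has_integral_add i1 i2 has_integral_mult_right i3)
    then show "((\<lambda>v. h' v * f (x v) + h v * generator (x v))
        has_integral J1 + J2 + of_real (c\<^sup>2 / 2) * J3) {s..u}"
      by (simp add: generator_def algebra_simps)
  qed
  have e1: "integral {s..u} (\<lambda>v. h' v * (f (x v) - f (x u))) = J1 - (h u - h s) * f (x u)"
    using has_integral_diff[OF i1 has_integral_mult_left[OF ih, of "f (x u)"]]
    by (intro integral_unique) (simp add: algebra_simps)
  have e2: "integral {s..u} (\<lambda>v. (h v * f' (x v) - h s * f' (x s)) * of_real (a + b * x v))
      = J2 - h s * f' (x s) * of_real A"
    using has_integral_diff[OF i2 has_integral_mult_right[OF iA, of "h s * f' (x s)"]]
    by (intro integral_unique) (simp add: algebra_simps)
  have e3: "integral {s..u} (\<lambda>v. h v * f'' (x v) - h s * f'' (x s))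
      = J3 - of_real (u - s) * (h s * f'' (x s))"
    by (intro integral_unique has_integral_diff i3 ic)
  have "x u = x s + A + c * D" using incr unfolding A_def D_def by simp
  then show ?thesis
    unfolding local_error_def e0 e1 e2 e3 A_def[symmetric] D_def[symmetric]
    by (simp add: algebra_simps power2_eq_square add_divide_distrib diff_divide_distrib)
qed

lemma local_error_bound:
  fixes x w :: "real \<Rightarrow> real"
  assumes xc: "continuous_on {0..T} x" and su: "0 \<le> s" "s \<le> u" "u \<le> T"
    and incr: "x u - x s = integral {s..u} (\<lambda>v. a + b * x v) + c * (w u - w s)"
    and small: "u - s \<le> \<epsilon>" "u - s \<le> 1" "\<bar>w u - w s\<bar> \<le> \<epsilon>"
    and bnd: "\<And>v. v \<in> {s..u} \<Longrightarrow> cmod (h' v) \<le> B \<and> cmod (h v) \<le> B \<and> cmod (f' (x v)) \<le> B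
                 \<and> cmod (f'' (x v)) \<le> B \<and> \<bar>a + b * x v\<bar> \<le> B"
    and osc: "\<And>v. v \<in> {s..u} \<Longrightarrow> cmod (f (x v) - f (x u)) \<le> \<epsilon> \<and> cmod (h v - h s) \<le> \<epsilon>
                 \<and> cmod (f' (x v) - f' (x s)) \<le> \<epsilon> \<and> cmod (f'' (x v) - f'' (x s)) \<le> \<epsilon>"
    and taylor: "\<And>z. z \<in> {min (x s) (x u)..max (x s) (x u)} \<Longrightarrow> cmod (f'' z - f'' (x s)) \<le> \<epsilon>"
  shows "cmod (local_error x w s u)
    \<le> \<epsilon> * (B + 2 * B\<^sup>2 + 2 * B ^ 3 + B\<^sup>2 * (B\<^sup>2 / 2 + \<bar>c\<bar> * B) + 3 * c\<^sup>2 * B) * ((u - s) + (w u - w s)\<^sup>2)"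
proof -
  have sub: "{s..u} \<subseteq> {0..T}" and s_in: "s \<in> {s..u}" using su by auto
  have xc': "continuous_on {s..u} x" using continuous_on_subset[OF xc sub] .
  have \<epsilon>: "\<epsilon> \<ge> 0" using small by linarith
  have B: "B \<ge> 0" using bnd[OF s_in] by (auto intro: order_trans[OF norm_ge_zero])
  define \<Delta> where "\<Delta> = u - s"
  define D where "D = w u - w s"
  define A where "A = integral {s..u} (\<lambda>v. a + b * x v)"
  have \<Delta>: "0 \<le> \<Delta>" "\<Delta> \<le> \<epsilon>" "\<Delta> \<le> 1" and D: "\<bar>D\<bar> \<le> \<epsilon>"
    using su small by (auto simp: \<Delta>_def D_def)
  have A: "\<bar>A\<bar> \<le> B * \<Delta>"
    unfolding A_def \<Delta>_def real_norm_def[symmetric]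
    by (rule integral_bound[OF su(2)], intro continuous_intros xc') (use bnd in auto)
  then have A2: "A\<^sup>2 \<le> B\<^sup>2 * \<Delta> * \<Delta>"
    by (metis abs_ge_zero power2_abs power_mono power_mult_distrib power2_eq_square mult.assoc)
  have b1: "cmod (integral {s..u} (\<lambda>v. h' v * (f (x v) - f (x u)))) \<le> (B * \<epsilon>) * \<Delta>"
    unfolding \<Delta>_def using su(2) sub
  proof (intro integral_bound continuous_intros xc')
    fix v assume v: "v \<in> {s..u}"
    show "cmod (h' v * (f (x v) - f (x u))) \<le> B * \<epsilon>"
      unfolding norm_mult using bnd[OF v] osc[OF v] B by (intro mult_mono) auto
  qed auto
  have b2: "cmod (integral {s..u} (\<lambda>v. (h v * f' (x v) - h s * f' (x s)) * of_real (a + b * x v)))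
      \<le> ((\<epsilon> * B + B * \<epsilon>) * B) * \<Delta>"
    unfolding \<Delta>_def using su(2) sub
  proof (intro integral_bound continuous_intros xc')
    fix v assume v: "v \<in> {s..u}"
    have "cmod (h v * f' (x v) - h s * f' (x s)) \<le> \<epsilon> * B + B * \<epsilon>"
      using bnd[OF v] bnd[OF s_in] osc[OF v] by (intro norm_mult_diff_le) auto
    then show "cmod ((h v * f' (x v) - h s * f' (x s)) * of_real (a + b * x v)) \<le> (\<epsilon> * B + B * \<epsilon>) * B"
      unfolding norm_mult norm_of_real using bnd[OF v] \<epsilon> B by (intro mult_mono) auto
  qed auto
  have b3_int: "cmod (integral {s..u} (\<lambda>v. h v * f'' (x v) - h s * f'' (x s))) \<le> (\<epsilon> * B + B * \<epsilon>) * \<Delta>"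
    unfolding \<Delta>_def using su(2) sub
  proof (intro integral_bound continuous_intros xc')
    fix v assume v: "v \<in> {s..u}"
    show "cmod (h v * f'' (x v) - h s * f'' (x s)) \<le> \<epsilon> * B + B * \<epsilon>"
      using bnd[OF v] bnd[OF s_in] osc[OF v] by (intro norm_mult_diff_le) auto
  qed auto
  have b3: "cmod (of_real (c\<^sup>2 / 2) * integral {s..u} (\<lambda>v. h v * f'' (x v) - h s * f'' (x s)))
      \<le> c\<^sup>2 / 2 * ((\<epsilon> * B + B * \<epsilon>) * \<Delta>)"
    using mult_left_mono[OF b3_int, of "c\<^sup>2 / 2"] by (simp add: norm_mult norm_power)
  have "\<bar>(A\<^sup>2 + 2 * c * A * D) / 2\<bar> \<le> (A\<^sup>2 + 2 * \<bar>c\<bar> * \<bar>A\<bar> * \<bar>D\<bar>) / 2"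
    by (auto simp: abs_mult intro!: order_trans[OF abs_triangle_ineq])
  also have "\<dots> \<le> (B\<^sup>2 * \<Delta> * \<epsilon> + 2 * \<bar>c\<bar> * (B * \<Delta>) * \<epsilon>) / 2"
    using A2 A D \<Delta> B by (intro divide_right_mono add_mono mult_mono order_trans[OF A2]) auto
  finally have b4: "cmod (h s * f'' (x s) * of_real ((A\<^sup>2 + 2 * c * A * D) / 2))
      \<le> B * B * ((B\<^sup>2 * \<Delta> * \<epsilon> + 2 * \<bar>c\<bar> * (B * \<Delta>) * \<epsilon>) / 2)"
    unfolding norm_mult norm_of_real using bnd[OF s_in] B by (intro mult_mono) auto
  have rem: "cmod (f (x u) - f (x s) - of_real (x u - x s) * f' (x s) - of_real ((x u - x s)\<^sup>2 / 2) * f'' (x s))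
      \<le> \<epsilon> * (x u - x s)\<^sup>2"
    by (rule taylor2_remainder_bound[OF f_deriv f'_deriv taylor])
  have "(x u - x s)\<^sup>2 = (A + c * D)\<^sup>2" using incr unfolding A_def D_def by simp
  also have "\<dots> \<le> 2 * A\<^sup>2 + 2 * c\<^sup>2 * D\<^sup>2"
    using zero_le_power2[of "A - c * D"] by (simp add: power2_eq_square algebra_simps)
  also have "\<dots> \<le> 2 * (B\<^sup>2 * \<Delta>) + 2 * c\<^sup>2 * D\<^sup>2"
    using A2 mult_left_mono[OF \<Delta>(3), of "B\<^sup>2 * \<Delta>"] \<Delta>(1) by simp
  finally have "\<epsilon> * (x u - x s)\<^sup>2 \<le> \<epsilon> * (2 * (B\<^sup>2 * \<Delta>) + 2 * c\<^sup>2 * D\<^sup>2)"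
    using \<epsilon> by (rule mult_left_mono)
  then have b5: "cmod (h s * (f (x u) - f (x s) - of_real (x u - x s) * f' (x s)
      - of_real ((x u - x s)\<^sup>2 / 2) * f'' (x s))) \<le> B * (\<epsilon> * (2 * (B\<^sup>2 * \<Delta>) + 2 * c\<^sup>2 * D\<^sup>2))"
    using rem bnd[OF s_in] B unfolding norm_mult by (intro mult_mono) auto
  define P where "P = B + 2 * B\<^sup>2 + 2 * B ^ 3 + B\<^sup>2 * (B\<^sup>2 / 2 + \<bar>c\<bar> * B) + c\<^sup>2 * B"
  have "P \<ge> 0" using B unfolding P_def by simp
  have "cmod (local_error x w s u) \<le> (B * \<epsilon>) * \<Delta> + ((\<epsilon> * B + B * \<epsilon>) * B) * \<Delta>
      + c\<^sup>2 / 2 * ((\<epsilon> * B + B * \<epsilon>) * \<Delta>) + B * B * ((B\<^sup>2 * \<Delta> * \<epsilon> + 2 * \<bar>c\<bar> * (B * \<Delta>) * \<epsilon>) / 2)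
      + B * (\<epsilon> * (2 * (B\<^sup>2 * \<Delta>) + 2 * c\<^sup>2 * D\<^sup>2))"
    unfolding local_error_eq[OF xc su incr] A_def[symmetric] D_def[symmetric]
    using b1 b2 b3 b4 b5 norm_triangle_ineq norm_triangle_ineq4 unfolding A_def D_def
    by (smt (verit))
  also have "\<dots> = \<epsilon> * P * \<Delta> + \<epsilon> * (2 * c\<^sup>2 * B) * D\<^sup>2"
    unfolding P_def by (simp add: algebra_simps power2_eq_square power3_eq_cube)
  also have "\<dots> \<le> \<epsilon> * (P + 2 * c\<^sup>2 * B) * (\<Delta> + D\<^sup>2)"
    using \<open>P \<ge> 0\<close> \<epsilon> B \<Delta>(1) by (simp add: algebra_simps)
  finally show ?thesis unfolding P_def \<Delta>_def D_def by (simp add: algebra_simps)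
qed

definition controlled_path :: "real \<Rightarrow> real \<Rightarrow> real \<Rightarrow> (real \<Rightarrow> real) \<Rightarrow> (real \<Rightarrow> real) \<Rightarrow> bool" where
  "controlled_path K \<rho> \<eta> x w \<longleftrightarrow> sde_path x w \<and> (\<forall>v\<in>{0..T}. \<bar>x v\<bar> \<le> K) \<and>
     (\<forall>v\<in>{0..T}. \<forall>v'\<in>{0..T}. \<bar>v - v'\<bar> < \<rho> \<longrightarrow> \<bar>w v - w v'\<bar> \<le> \<eta>)"

lemma sde_path_increment_bound:
  assumes "sde_path x w" "\<forall>v\<in>{0..T}. \<bar>x v\<bar> \<le> K" "v' \<in> {0..T}" "v \<in> {0..T}" "v' \<le> v"
  shows "\<bar>x v - x v'\<bar> \<le> (\<bar>a\<bar> + \<bar>b\<bar> * K) * (v - v') + \<bar>c\<bar> * \<bar>w v - w v'\<bar>"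
proof -
  have sub: "{v'..v} \<subseteq> {0..T}" using assms(3,4) by auto
  have "norm (integral {v'..v} (\<lambda>s. a + b * x s)) \<le> (\<bar>a\<bar> + \<bar>b\<bar> * K) * (v - v')"
  proof (rule integral_bound[OF assms(5)])
    have "continuous_on {v'..v} x"
      using assms(1) continuous_on_subset[OF _ sub] by (auto simp: sde_path_def)
    then show "continuous_on {v'..v} (\<lambda>s. a + b * x s)" by (intro continuous_intros)
    fix s assume "s \<in> {v'..v}"
    then have "\<bar>b\<bar> * \<bar>x s\<bar> \<le> \<bar>b\<bar> * K" using assms(2) sub by (intro mult_left_mono) auto
    then show "norm (a + b * x s) \<le> \<bar>a\<bar> + \<bar>b\<bar> * K"
      using abs_triangle_ineq[of a "b * x s"] by (simp add: abs_mult)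
  qed
  moreover have "x v - x v' = integral {v'..v} (\<lambda>s. a + b * x s) + c * (w v - w v')"
    using assms(1,3-5) by (auto simp: sde_path_def)
  ultimately show ?thesis
    using abs_triangle_ineq[of "integral {v'..v} (\<lambda>s. a + b * x s)" "c * (w v - w v')"]
    by (simp add: abs_mult)
qed

lemma controlled_path_modulus:
  assumes "K \<ge> 0" "d > 0"
  obtains \<eta> \<rho> where "0 < \<eta>" "\<eta> < d" "0 < \<rho>" "\<rho> \<le> d"
    "\<And>\<rho>1 x w v v'. \<rho>1 \<le> \<rho> \<Longrightarrow> controlled_path K \<rho>1 \<eta> x w \<Longrightarrow> v \<in> {0..T} \<Longrightarrow> v' \<in> {0..T} \<Longrightarrow>
       \<bar>v - v'\<bar> < \<rho>1 \<Longrightarrow> \<bar>x v - x v'\<bar> < d"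
proof
  define L where "L = \<bar>a\<bar> + \<bar>b\<bar> * K"
  have L: "L \<ge> 0" using assms(1) by (simp add: L_def)
  show "0 < d / (2 * (\<bar>c\<bar> + 1))" "d / (2 * (\<bar>c\<bar> + 1)) < d" "0 < min d (d / (2 * (L + 1)))"
    "min d (d / (2 * (L + 1))) \<le> d"
    using assms(2) L by (auto intro!: divide_pos_pos simp: min_def divide_le_eq pos_divide_less_eq)
  have "L * (d / (2 * (L + 1))) < d / 2" "\<bar>c\<bar> * (d / (2 * (\<bar>c\<bar> + 1))) < d / 2"
    using assms(2) L by (simp_all add: field_simps)
  then have key: "\<bar>x v - x v'\<bar> < d"
    if "\<rho>1 \<le> min d (d / (2 * (L + 1)))" "controlled_path K \<rho>1 (d / (2 * (\<bar>c\<bar> + 1))) x w"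
      "v' \<in> {0..T}" "v \<in> {0..T}" "v' \<le> v" "v - v' < \<rho>1" for \<rho>1 x w v v'
  proof -
    have "\<bar>x v - x v'\<bar> \<le> L * (v - v') + \<bar>c\<bar> * \<bar>w v - w v'\<bar>"
      using that sde_path_increment_bound[of x w K v' v] by (auto simp: controlled_path_def L_def)
    also have "\<dots> \<le> L * (d / (2 * (L + 1))) + \<bar>c\<bar> * (d / (2 * (\<bar>c\<bar> + 1)))"
      using that L by (intro add_mono mult_left_mono) (auto simp: controlled_path_def)
    finally show ?thesis using \<open>L * _ < d / 2\<close> \<open>\<bar>c\<bar> * _ < d / 2\<close> by linarith
  qed
  fix \<rho>1 x w v v'
  assume "\<rho>1 \<le> min d (d / (2 * (L + 1)))" "controlled_path K \<rho>1 (d / (2 * (\<bar>c\<bar> + 1))) x w"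
    "v \<in> {0..T}" "v' \<in> {0..T}" "\<bar>v - v'\<bar> < \<rho>1"
  then show "\<bar>x v - x v'\<bar> < d"
    using key[of \<rho>1 x w v' v] key[of \<rho>1 x w v v'] by (cases "v' \<le> v") (auto simp: abs_minus_commute)
qed

lemma uniform_bounds:
  assumes "K \<ge> 0"
  obtains B where "B \<ge> 0" "\<And>v y. v \<in> {0..T} \<Longrightarrow> \<bar>y\<bar> \<le> K \<Longrightarrow>
    cmod (h' v) \<le> B \<and> cmod (h v) \<le> B \<and> cmod (f' y) \<le> B \<and> cmod (f'' y) \<le> B \<and> \<bar>a + b * y\<bar> \<le> B"
proof -
  obtain B1 where B1: "B1 \<ge> 0" "\<forall>v\<in>{0..T}. cmod (h' v) \<le> B1"
    using continuous_on_compact_norm_bound[OF continuous_on_h'[OF order_refl] compact_Icc] by blast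
  obtain B2 where B2: "B2 \<ge> 0" "\<forall>v\<in>{0..T}. cmod (h v) \<le> B2"
    using continuous_on_compact_norm_bound[OF continuous_on_h[OF order_refl] compact_Icc] by blast
  obtain B3 where B3: "B3 \<ge> 0" "\<forall>y\<in>{-K..K}. cmod (f' y) \<le> B3"
    using continuous_on_compact_norm_bound[OF continuous_on_f'[OF continuous_on_id] compact_Icc] by blast
  obtain B4 where B4: "B4 \<ge> 0" "\<forall>y\<in>{-K..K}. cmod (f'' y) \<le> B4"
    using continuous_on_compact_norm_bound[OF continuous_on_f''[OF continuous_on_id] compact_Icc] by blast
  have bK: "\<bar>b\<bar> * K \<ge> 0" using assms by simp
  show ?thesis
  proof (rule that[of "B1 + B2 + B3 + B4 + \<bar>a\<bar> + \<bar>b\<bar> * K"])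
    show "B1 + B2 + B3 + B4 + \<bar>a\<bar> + \<bar>b\<bar> * K \<ge> 0" using B1 B2 B3 B4 bK by simp
    fix v y assume v: "v \<in> {0..T}" and y: "\<bar>y\<bar> \<le> K"
    have "\<bar>a + b * y\<bar> \<le> \<bar>a\<bar> + \<bar>b\<bar> * K"
      using abs_triangle_ineq[of a "b * y"] mult_left_mono[OF y, of "\<bar>b\<bar>"] by (simp add: abs_mult)
    moreover have "y \<in> {-K..K}" using y by (simp add: abs_le_iff)
    ultimately show "cmod (h' v) \<le> B1 + B2 + B3 + B4 + \<bar>a\<bar> + \<bar>b\<bar> * K
        \<and> cmod (h v) \<le> B1 + B2 + B3 + B4 + \<bar>a\<bar> + \<bar>b\<bar> * K
        \<and> cmod (f' y) \<le> B1 + B2 + B3 + B4 + \<bar>a\<bar> + \<bar>b\<bar> * K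
        \<and> cmod (f'' y) \<le> B1 + B2 + B3 + B4 + \<bar>a\<bar> + \<bar>b\<bar> * K
        \<and> \<bar>a + b * y\<bar> \<le> B1 + B2 + B3 + B4 + \<bar>a\<bar> + \<bar>b\<bar> * K"
      using B1 B2 B3 B4 bK v by (intro conjI) (force+)
  qed
qed

lemma uniform_moduli:
  assumes "\<epsilon> > 0"
  obtains d where "d > 0" "\<And>v v' y y'. v \<in> {0..T} \<Longrightarrow> v' \<in> {0..T} \<Longrightarrow> \<bar>y\<bar> \<le> K \<Longrightarrow> \<bar>y'\<bar> \<le> K \<Longrightarrow>
    \<bar>v - v'\<bar> < d \<Longrightarrow> \<bar>y - y'\<bar> < d \<Longrightarrow>
    cmod (h v - h v') \<le> \<epsilon> \<and> cmod (f y - f y') \<le> \<epsilon> \<and> cmod (f' y - f' y') \<le> \<epsilon> \<and> cmod (f'' y - f'' y') \<le> \<epsilon>"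
proof -
  obtain d1 where d1: "d1 > 0" "\<forall>v\<in>{0..T}. \<forall>v'\<in>{0..T}. \<bar>v - v'\<bar> < d1 \<longrightarrow> cmod (h v - h v') \<le> \<epsilon>"
    using continuous_on_compact_modulus[OF continuous_on_h[OF order_refl] compact_Icc assms] by blast
  obtain d2 where d2: "d2 > 0" "\<forall>y\<in>{-K..K}. \<forall>y'\<in>{-K..K}. \<bar>y - y'\<bar> < d2 \<longrightarrow> cmod (f y - f y') \<le> \<epsilon>"
    using continuous_on_compact_modulus[OF continuous_on_f[OF continuous_on_id] compact_Icc assms] by blast
  obtain d3 where d3: "d3 > 0" "\<forall>y\<in>{-K..K}. \<forall>y'\<in>{-K..K}. \<bar>y - y'\<bar> < d3 \<longrightarrow> cmod (f' y - f' y') \<le> \<epsilon>"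
    using continuous_on_compact_modulus[OF continuous_on_f'[OF continuous_on_id] compact_Icc assms] by blast
  obtain d4 where d4: "d4 > 0" "\<forall>y\<in>{-K..K}. \<forall>y'\<in>{-K..K}. \<bar>y - y'\<bar> < d4 \<longrightarrow> cmod (f'' y - f'' y') \<le> \<epsilon>"
    using continuous_on_compact_modulus[OF continuous_on_f''[OF continuous_on_id] compact_Icc assms] by blast
  show ?thesis
  proof (rule that[of "min (min d1 d2) (min d3 d4)"])
    fix v v' y y' assume "v \<in> {0..T}" "v' \<in> {0..T}" "\<bar>y\<bar> \<le> K" "\<bar>y'\<bar> \<le> K"
      "\<bar>v - v'\<bar> < min (min d1 d2) (min d3 d4)" "\<bar>y - y'\<bar> < min (min d1 d2) (min d3 d4)"
    then have "y \<in> {-K..K}" "y' \<in> {-K..K}" "\<bar>v - v'\<bar> < d1" "\<bar>y - y'\<bar> < d2" "\<bar>y - y'\<bar> < d3"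
      "\<bar>y - y'\<bar> < d4" by (auto simp: abs_le_iff)
    then show "cmod (h v - h v') \<le> \<epsilon> \<and> cmod (f y - f y') \<le> \<epsilon> \<and> cmod (f' y - f' y') \<le> \<epsilon>
        \<and> cmod (f'' y - f'' y') \<le> \<epsilon>"
      using d1 d2 d3 d4 \<open>v \<in> {0..T}\<close> \<open>v' \<in> {0..T}\<close> by blast
  qed (use d1 d2 d3 d4 in auto)
qed

lemma local_error_small:
  assumes "K \<ge> 0" "\<epsilon> > 0"
  obtains d where "d > 0"
    "\<And>x w s u. sde_path x w \<Longrightarrow> \<forall>v\<in>{0..T}. \<bar>x v\<bar> \<le> K \<Longrightarrow> 0 \<le> s \<Longrightarrow> s \<le> u \<Longrightarrow> u \<le> T \<Longrightarrow>
       u - s < d \<Longrightarrow> \<bar>w u - w s\<bar> < d \<Longrightarrow> \<forall>v\<in>{s..u}. \<bar>x v - x s\<bar> < d \<and> \<bar>x v - x u\<bar> < d \<Longrightarrow>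
       cmod (local_error x w s u) \<le> \<epsilon> * ((u - s) + (w u - w s)\<^sup>2)"
proof -
  obtain B where B: "B \<ge> 0" "\<And>v y. v \<in> {0..T} \<Longrightarrow> \<bar>y\<bar> \<le> K \<Longrightarrow>
      cmod (h' v) \<le> B \<and> cmod (h v) \<le> B \<and> cmod (f' y) \<le> B \<and> cmod (f'' y) \<le> B \<and> \<bar>a + b * y\<bar> \<le> B"
    using uniform_bounds[OF \<open>K \<ge> 0\<close>] by blast
  define C where "C = B + 2 * B\<^sup>2 + 2 * B ^ 3 + B\<^sup>2 * (B\<^sup>2 / 2 + \<bar>c\<bar> * B) + 3 * c\<^sup>2 * B"
  have "C \<ge> 0" using B(1) by (simp add: C_def)
  define \<epsilon>1 where "\<epsilon>1 = \<epsilon> / (C + 1)"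
  have \<epsilon>1: "\<epsilon>1 > 0" "\<epsilon>1 * C \<le> \<epsilon>"
    using \<open>C \<ge> 0\<close> \<open>\<epsilon> > 0\<close> by (auto simp: \<epsilon>1_def field_simps)
  obtain d0 where d0: "d0 > 0" "\<And>v v' y y'. v \<in> {0..T} \<Longrightarrow> v' \<in> {0..T} \<Longrightarrow> \<bar>y\<bar> \<le> K \<Longrightarrow> \<bar>y'\<bar> \<le> K \<Longrightarrow>
      \<bar>v - v'\<bar> < d0 \<Longrightarrow> \<bar>y - y'\<bar> < d0 \<Longrightarrow> cmod (h v - h v') \<le> \<epsilon>1 \<and> cmod (f y - f y') \<le> \<epsilon>1
        \<and> cmod (f' y - f' y') \<le> \<epsilon>1 \<and> cmod (f'' y - f'' y') \<le> \<epsilon>1"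
    using uniform_moduli[OF \<epsilon>1(1)] by blast
  show ?thesis
  proof (rule that[of "min d0 (min \<epsilon>1 1)"])
    show "min d0 (min \<epsilon>1 1) > 0" using d0(1) \<epsilon>1(1) by simp
    fix x w s u
    assume sde: "sde_path x w" and K: "\<forall>v\<in>{0..T}. \<bar>x v\<bar> \<le> K" and su: "0 \<le> s" "s \<le> u" "u \<le> T"
      and small: "u - s < min d0 (min \<epsilon>1 1)" "\<bar>w u - w s\<bar> < min d0 (min \<epsilon>1 1)"
      and osc: "\<forall>v\<in>{s..u}. \<bar>x v - x s\<bar> < min d0 (min \<epsilon>1 1) \<and> \<bar>x v - x u\<bar> < min d0 (min \<epsilon>1 1)"
    have in_T: "v \<in> {0..T}" if "v \<in> {s..u}" for v using that su by auto
    have "cmod (local_error x w s u) \<le> \<epsilon>1 * C * ((u - s) + (w u - w s)\<^sup>2)"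
      unfolding C_def
    proof (rule local_error_bound)
      show "continuous_on {0..T} x" "x u - x s = integral {s..u} (\<lambda>v. a + b * x v) + c * (w u - w s)"
        using sde su by (auto simp: sde_path_def)
      fix v assume v: "v \<in> {s..u}"
      show "cmod (h' v) \<le> B \<and> cmod (h v) \<le> B \<and> cmod (f' (x v)) \<le> B \<and> cmod (f'' (x v)) \<le> B
          \<and> \<bar>a + b * x v\<bar> \<le> B"
        using B(2) in_T[OF v] K by blast
      have "\<bar>v - u\<bar> < d0" "\<bar>v - s\<bar> < d0" "\<bar>x v - x u\<bar> < d0" "\<bar>x v - x s\<bar> < d0"
        using v small osc by auto
      then show "cmod (f (x v) - f (x u)) \<le> \<epsilon>1 \<and> cmod (h v - h s) \<le> \<epsilon>1 \<and> cmod (f' (x v) - f' (x s)) \<le> \<epsilon>1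
          \<and> cmod (f'' (x v) - f'' (x s)) \<le> \<epsilon>1"
        using d0(2)[of v u "x v" "x u"] d0(2)[of v s "x v" "x s"] in_T[OF v] su K by simp
    next
      fix z assume z: "z \<in> {min (x s) (x u)..max (x s) (x u)}"
      have "\<bar>z - x s\<bar> < d0" "\<bar>z\<bar> \<le> K"
        using z osc[rule_format, of u] su K[rule_format, of s] K[rule_format, of u] by (auto simp: abs_le_iff)
      then show "cmod (f'' z - f'' (x s)) \<le> \<epsilon>1"
        using d0(1) d0(2)[of s s z "x s"] su K by simp
    qed (use su small in auto)
    also have "\<dots> \<le> \<epsilon> * ((u - s) + (w u - w s)\<^sup>2)"
      using \<epsilon>1(2) su by (intro mult_right_mono) auto
    finally show "cmod (local_error x w s u) \<le> \<epsilon> * ((u - s) + (w u - w s)\<^sup>2)" .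
  qed
qed

definition forward_sum :: "(real \<Rightarrow> real) \<Rightarrow> (real \<Rightarrow> real) \<Rightarrow> (nat \<Rightarrow> real) \<Rightarrow> nat \<Rightarrow> complex" where
  "forward_sum x w \<tau> n = (\<Sum>i<n. h (\<tau> i) * (of_real c * f' (x (\<tau> i))) * of_real (w (\<tau> (Suc i)) - w (\<tau> i)))"

definition ito_target :: "(real \<Rightarrow> real) \<Rightarrow> real \<Rightarrow> complex" where
  "ito_target x t = h T * f (x T) - h t * f (x t) - integral {t..T} (\<lambda>s. h' s * f (x s) + h s * generator (x s))"

lemma ito_target_eq:
  "ito_target x t = integral {t..T} (\<lambda>s. h s * - generator (x s) - h' s * f (x s))
     + h T * f (x T) - h t * f (x t)"
proof -
  have "integral {t..T} (\<lambda>s. h s * - generator (x s) - h' s * f (x s))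
      = - integral {t..T} (\<lambda>s. h' s * f (x s) + h s * generator (x s))"
    unfolding integral_neg[symmetric] by (rule arg_cong[where f = "integral {t..T}"]) (simp add: fun_eq_iff)
  then show ?thesis by (simp add: ito_target_def)
qed

lemma forward_sum_decomposition:
  assumes xc: "continuous_on {0..T} x" and "0 \<le> t" and P: "is_partition \<tau> n t T"
  shows "forward_sum x w \<tau> n - ito_target x t = (\<Sum>i<n. local_error x w (\<tau> i) (\<tau> (Suc i)))
           - of_real (c\<^sup>2 / 2) * (\<Sum>i<n. h (\<tau> i) * f'' (x (\<tau> i)) * of_real (qv_defect w \<tau> i))"
proof -
  define G where "G = (\<lambda>s. h' s * f (x s) + h s * generator (x s))"
  define F where "F = (\<lambda>s. h s * f (x s))"
  have inc: "\<forall>i<n. \<tau> i < \<tau> (Suc i)" and ends: "\<tau> 0 = t" "\<tau> n = T"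
    using P by (auto simp: is_partition_def)
  have sub: "{t..T} \<subseteq> {0..T}" using \<open>0 \<le> t\<close> by auto
  have "continuous_on {t..T} G"
    unfolding G_def using sub continuous_on_subset[OF xc sub] by (intro continuous_intros) auto
  then have "(\<Sum>i<n. integral {\<tau> i..\<tau> (Suc i)} G) = integral {t..T} G"
    using integral_partition_sum[OF inc, of G] integrable_continuous_interval[of t T G] ends by simp
  moreover have "(\<Sum>i<n. F (\<tau> (Suc i)) - F (\<tau> i)) = F T - F t"
    using sum_lessThan_telescope[of "\<lambda>i. F (\<tau> i)" n] ends by simp
  moreover have "(\<Sum>i<n. local_error x w (\<tau> i) (\<tau> (Suc i)))
      = forward_sum x w \<tau> n - (\<Sum>i<n. F (\<tau> (Suc i)) - F (\<tau> i)) + (\<Sum>i<n. integral {\<tau> i..\<tau> (Suc i)} G)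
        + of_real (c\<^sup>2 / 2) * (\<Sum>i<n. h (\<tau> i) * f'' (x (\<tau> i)) * of_real (qv_defect w \<tau> i))"
    unfolding local_error_def forward_sum_def F_def G_def qv_defect_def
    by (simp add: sum.distrib sum_subtractf sum_distrib_left mult.assoc)
  moreover have "E = S - (F1 - F0) + I + k * Q \<Longrightarrow> S - (F1 - F0 - I) = E - k * Q"
    for E S F1 F0 I k Q :: complex by (simp add: algebra_simps)
  ultimately show ?thesis unfolding ito_target_def F_def G_def by simp
qed

lemma forward_sum_error_bound:
  fixes \<kappa> :: "nat \<Rightarrow> nat"
  assumes xc: "continuous_on {0..T} x" and "0 \<le> t" and P: "is_partition \<tau> n t T" and "\<epsilon> \<ge> 0"
    and err: "\<forall>i<n. cmod (local_error x w (\<tau> i) (\<tau> (Suc i)))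
                 \<le> \<epsilon> * ((\<tau> (Suc i) - \<tau> i) + (w (\<tau> (Suc i)) - w (\<tau> i))\<^sup>2)"
    and blocks: "\<forall>i<n. \<kappa> i < m" "\<forall>i<n. cmod (h (\<tau> i) * f'' (x (\<tau> i)) - z (\<kappa> i)) \<le> \<epsilon>"
      "\<forall>k<m. cmod (z k) \<le> G"
  shows "cmod (forward_sum x w \<tau> n - ito_target x t)
    \<le> (1 + c\<^sup>2 / 2) * \<epsilon> * (2 * (T - t) + \<bar>\<Sum>i<n. qv_defect w \<tau> i\<bar>)
      + c\<^sup>2 / 2 * (G * (\<Sum>k<m. \<bar>\<Sum>i\<in>{i. i < n \<and> \<kappa> i = k}. qv_defect w \<tau> i\<bar>))"
proof -
  define Y where "Y = qv_defect w \<tau>"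
  define V where "V = 2 * (T - t) + \<bar>\<Sum>i<n. Y i\<bar>"
  have inc: "\<forall>i<n. \<tau> i < \<tau> (Suc i)" and ends: "\<tau> 0 = t" "\<tau> n = T"
    using P by (auto simp: is_partition_def)
  have "(\<Sum>i<n. \<tau> (Suc i) - \<tau> i) = T - t"
    using sum_lessThan_telescope[of \<tau> n] ends by simp
  then have "(\<Sum>i<n. 2 * (\<tau> (Suc i) - \<tau> i) + Y i) = 2 * (T - t) + (\<Sum>i<n. Y i)"
    unfolding sum.distrib sum_distrib_left[symmetric] by simp
  then have total: "(\<Sum>i<n. 2 * (\<tau> (Suc i) - \<tau> i) + Y i) \<le> V" by (simp add: V_def)
  have "cmod (\<Sum>i<n. local_error x w (\<tau> i) (\<tau> (Suc i))) \<le> (\<Sum>i<n. \<epsilon> * (2 * (\<tau> (Suc i) - \<tau> i) + Y i))"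
  proof (intro order_trans[OF norm_sum sum_mono])
    fix i assume "i \<in> {..<n}"
    have eq: "2 * (\<tau> (Suc i) - \<tau> i) + Y i = (\<tau> (Suc i) - \<tau> i) + (w (\<tau> (Suc i)) - w (\<tau> i))\<^sup>2"
      by (simp add: Y_def qv_defect_def)
    show "cmod (local_error x w (\<tau> i) (\<tau> (Suc i))) \<le> \<epsilon> * (2 * (\<tau> (Suc i) - \<tau> i) + Y i)"
      unfolding eq using err \<open>i \<in> {..<n}\<close> by blast
  qed
  also have "\<dots> \<le> \<epsilon> * V"
    using total \<open>\<epsilon> \<ge> 0\<close> by (simp add: sum_distrib_left[symmetric] mult_left_mono)
  finally have local_sum: "cmod (\<Sum>i<n. local_error x w (\<tau> i) (\<tau> (Suc i))) \<le> \<epsilon> * V" .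
  have "(\<Sum>i<n. \<bar>Y i\<bar>) \<le> (\<Sum>i<n. 2 * (\<tau> (Suc i) - \<tau> i) + Y i)"
    using inc by (intro sum_mono) (auto simp: Y_def qv_defect_def abs_le_iff)
  then have "\<epsilon> * (\<Sum>i<n. \<bar>Y i\<bar>) \<le> \<epsilon> * V"
    using total \<open>\<epsilon> \<ge> 0\<close> by (intro mult_left_mono) auto
  then have weighted_sum: "cmod (\<Sum>i<n. h (\<tau> i) * f'' (x (\<tau> i)) * of_real (Y i))
      \<le> \<epsilon> * V + G * (\<Sum>k<m. \<bar>\<Sum>i\<in>{i. i < n \<and> \<kappa> i = k}. Y i\<bar>)"
    using norm_sum_blocks_le[where g = "\<lambda>i. h (\<tau> i) * f'' (x (\<tau> i))" and Y = Y, OF blocks]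
    by linarith
  have correction: "cmod (of_real (c\<^sup>2 / 2) * (\<Sum>i<n. h (\<tau> i) * f'' (x (\<tau> i)) * of_real (Y i)))
      \<le> c\<^sup>2 / 2 * (\<epsilon> * V + G * (\<Sum>k<m. \<bar>\<Sum>i\<in>{i. i < n \<and> \<kappa> i = k}. Y i\<bar>))"
  proof -
    have "\<bar>c\<^sup>2 / 2\<bar> = c\<^sup>2 / 2" by simp
    then show ?thesis
      unfolding norm_mult norm_of_real by (simp only:) (rule mult_left_mono[OF weighted_sum], simp)
  qed
  have regroup: "e * v + k * (e * v + r) = (1 + k) * e * v + k * r" for e v k r :: real
    by (simp add: algebra_simps)
  have "cmod (forward_sum x w \<tau> n - ito_target x t)
      \<le> cmod (\<Sum>i<n. local_error x w (\<tau> i) (\<tau> (Suc i)))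
        + cmod (of_real (c\<^sup>2 / 2) * (\<Sum>i<n. h (\<tau> i) * f'' (x (\<tau> i)) * of_real (Y i)))"
    unfolding forward_sum_decomposition[OF xc \<open>0 \<le> t\<close> P] Y_def by (rule norm_triangle_ineq4)
  also have "\<dots> \<le> \<epsilon> * V + c\<^sup>2 / 2 * (\<epsilon> * V + G * (\<Sum>k<m. \<bar>\<Sum>i\<in>{i. i < n \<and> \<kappa> i = k}. Y i\<bar>))"
    using local_sum correction by (rule add_mono)
  also have "\<dots> = (1 + c\<^sup>2 / 2) * \<epsilon> * V + c\<^sup>2 / 2 * (G * (\<Sum>k<m. \<bar>\<Sum>i\<in>{i. i < n \<and> \<kappa> i = k}. Y i\<bar>))"
    by (rule regroup)
  finally show ?thesis unfolding V_def Y_def .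
qed

lemma controlled_path_local_estimates:
  assumes K: "K \<ge> 0" and \<epsilon>: "\<epsilon> > 0"
  obtains \<eta> \<rho> where "\<eta> > 0" "\<rho> > 0"
    "\<And>\<rho>1 x w s u. \<rho>1 \<le> \<rho> \<Longrightarrow> controlled_path K \<rho>1 \<eta> x w \<Longrightarrow> 0 \<le> s \<Longrightarrow> s \<le> u \<Longrightarrow> u \<le> T \<Longrightarrow>
       u - s < \<rho>1 \<Longrightarrow> cmod (local_error x w s u) \<le> \<epsilon> * ((u - s) + (w u - w s)\<^sup>2)"
    "\<And>\<rho>1 x w v v'. \<rho>1 \<le> \<rho> \<Longrightarrow> controlled_path K \<rho>1 \<eta> x w \<Longrightarrow> v \<in> {0..T} \<Longrightarrow> v' \<in> {0..T} \<Longrightarrow>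
       \<bar>v - v'\<bar> < \<rho>1 \<Longrightarrow> cmod (h v * f'' (x v) - h v' * f'' (x v')) \<le> \<epsilon>"
proof -
  obtain B where B: "B \<ge> 0" "\<And>v y. v \<in> {0..T} \<Longrightarrow> \<bar>y\<bar> \<le> K \<Longrightarrow>
      cmod (h' v) \<le> B \<and> cmod (h v) \<le> B \<and> cmod (f' y) \<le> B \<and> cmod (f'' y) \<le> B \<and> \<bar>a + b * y\<bar> \<le> B"
    using uniform_bounds[OF K] by blast
  have "\<epsilon> / (2 * B + 1) * B + B * (\<epsilon> / (2 * B + 1)) = (2 * B) * (\<epsilon> / (2 * B + 1))"
    by (simp add: algebra_simps)
  also have "\<dots> \<le> (2 * B + 1) * (\<epsilon> / (2 * B + 1))"
    using B(1) \<epsilon> by (intro mult_right_mono) auto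
  also have "\<dots> = \<epsilon>"
    using B(1) by simp
  finally have \<epsilon>B: "\<epsilon> / (2 * B + 1) > 0" "\<epsilon> / (2 * B + 1) * B + B * (\<epsilon> / (2 * B + 1)) \<le> \<epsilon>"
    using B(1) \<epsilon> by auto
  obtain d1 where d1: "d1 > 0" "\<And>x w s u. sde_path x w \<Longrightarrow> \<forall>v\<in>{0..T}. \<bar>x v\<bar> \<le> K \<Longrightarrow> 0 \<le> s \<Longrightarrow> s \<le> u \<Longrightarrow>
      u \<le> T \<Longrightarrow> u - s < d1 \<Longrightarrow> \<bar>w u - w s\<bar> < d1 \<Longrightarrow> \<forall>v\<in>{s..u}. \<bar>x v - x s\<bar> < d1 \<and> \<bar>x v - x u\<bar> < d1 \<Longrightarrow>
      cmod (local_error x w s u) \<le> \<epsilon> * ((u - s) + (w u - w s)\<^sup>2)"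
    using local_error_small[OF K \<epsilon>] by blast
  obtain d2 where d2: "d2 > 0" "\<And>v v' y y'. v \<in> {0..T} \<Longrightarrow> v' \<in> {0..T} \<Longrightarrow> \<bar>y\<bar> \<le> K \<Longrightarrow> \<bar>y'\<bar> \<le> K \<Longrightarrow>
      \<bar>v - v'\<bar> < d2 \<Longrightarrow> \<bar>y - y'\<bar> < d2 \<Longrightarrow> cmod (h v - h v') \<le> \<epsilon> / (2 * B + 1)
        \<and> cmod (f y - f y') \<le> \<epsilon> / (2 * B + 1) \<and> cmod (f' y - f' y') \<le> \<epsilon> / (2 * B + 1)
        \<and> cmod (f'' y - f'' y') \<le> \<epsilon> / (2 * B + 1)"
    using uniform_moduli[OF \<epsilon>B(1), of K] by blast
  obtain \<eta> \<rho> where \<eta>\<rho>: "0 < \<eta>" "\<eta> < min d1 d2" "0 < \<rho>" "\<rho> \<le> min d1 d2"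
    and modulus: "\<And>\<rho>1 x w v v'. \<rho>1 \<le> \<rho> \<Longrightarrow> controlled_path K \<rho>1 \<eta> x w \<Longrightarrow> v \<in> {0..T} \<Longrightarrow>
      v' \<in> {0..T} \<Longrightarrow> \<bar>v - v'\<bar> < \<rho>1 \<Longrightarrow> \<bar>x v - x v'\<bar> < min d1 d2"
    using controlled_path_modulus[OF K, of "min d1 d2"] d1(1) d2(1) by auto
  show ?thesis
  proof (rule that[OF \<eta>\<rho>(1,3)])
    fix \<rho>1 x w s u
    assume \<rho>1: "\<rho>1 \<le> \<rho>" and C: "controlled_path K \<rho>1 \<eta> x w" and su: "0 \<le> s" "s \<le> u" "u \<le> T" "u - s < \<rho>1"
    then have sT: "s \<in> {0..T}" "u \<in> {0..T}" and "\<bar>u - s\<bar> < \<rho>1" by auto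
    have x_osc: "\<bar>x v - x v'\<bar> < d1" if "v \<in> {s..u}" "v' \<in> {s..u}" for v v'
      using modulus[OF \<rho>1 C, of v v'] that su by auto
    have "\<bar>w u - w s\<bar> \<le> \<eta>"
      using C sT \<open>\<bar>u - s\<bar> < \<rho>1\<close> unfolding controlled_path_def by blast
    show "cmod (local_error x w s u) \<le> \<epsilon> * ((u - s) + (w u - w s)\<^sup>2)"
    proof (rule d1(2))
      show "sde_path x w" "\<forall>v\<in>{0..T}. \<bar>x v\<bar> \<le> K" using C unfolding controlled_path_def by blast+
      show "u - s < d1" "\<bar>w u - w s\<bar> < d1" using su \<rho>1 \<eta>\<rho>(2,4) \<open>\<bar>w u - w s\<bar> \<le> \<eta>\<close> by auto
      show "\<forall>v\<in>{s..u}. \<bar>x v - x s\<bar> < d1 \<and> \<bar>x v - x u\<bar> < d1" using x_osc su by auto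
    qed (use su in auto)
  next
    fix \<rho>1 x w v v'
    assume \<rho>1: "\<rho>1 \<le> \<rho>" and C: "controlled_path K \<rho>1 \<eta> x w" and v: "v \<in> {0..T}" "v' \<in> {0..T}"
      and vv': "\<bar>v - v'\<bar> < \<rho>1"
    have "\<bar>x v\<bar> \<le> K" "\<bar>x v'\<bar> \<le> K" using C v unfolding controlled_path_def by blast+
    moreover have "\<bar>x v - x v'\<bar> < d2" using modulus[OF \<rho>1 C v vv'] by simp
    ultimately have "cmod (h v - h v') \<le> \<epsilon> / (2 * B + 1)" "cmod (f'' (x v) - f'' (x v')) \<le> \<epsilon> / (2 * B + 1)"
      using d2(2)[OF v] vv' \<rho>1 \<eta>\<rho>(4) by auto
    with B(2)[OF v(1) \<open>\<bar>x v\<bar> \<le> K\<close>] B(2)[OF v(2) \<open>\<bar>x v'\<bar> \<le> K\<close>]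
    have "cmod (h v * f'' (x v) - h v' * f'' (x v')) \<le> \<epsilon> / (2 * B + 1) * B + B * (\<epsilon> / (2 * B + 1))"
      by (intro norm_mult_diff_le) auto
    with \<epsilon>B(2) show "cmod (h v * f'' (x v) - h v' * f'' (x v')) \<le> \<epsilon>" by linarith
  qed
qed

lemma pathwise_error_bound:
  assumes K: "K \<ge> 0" and t: "0 \<le> t" "t \<le> T" and \<epsilon>: "\<epsilon> > 0"
  obtains \<eta> \<rho> G where "\<eta> > 0" "\<rho> > 0" "G \<ge> 0"
    "\<And>\<rho>1 x w \<tau> n m (\<kappa> :: nat \<Rightarrow> nat) \<sigma>. \<rho>1 \<le> \<rho> \<Longrightarrow> controlled_path K \<rho>1 \<eta> x w \<Longrightarrow>
       is_partition \<tau> n t T \<Longrightarrow> \<forall>i<n. \<tau> (Suc i) - \<tau> i < \<rho>1 \<Longrightarrow> \<forall>k<m. \<sigma> k \<in> {0..T} \<Longrightarrow>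
       \<forall>i<n. \<kappa> i < m \<and> \<bar>\<tau> i - \<sigma> (\<kappa> i)\<bar> < \<rho>1 \<Longrightarrow>
       cmod (forward_sum x w \<tau> n - ito_target x t)
         \<le> \<epsilon> * (1 + \<bar>\<Sum>i<n. qv_defect w \<tau> i\<bar>)
           + G * (\<Sum>k<m. \<bar>\<Sum>i\<in>{i. i < n \<and> \<kappa> i = k}. qv_defect w \<tau> i\<bar>)"
proof -
  define L where "L = (1 + c\<^sup>2 / 2) * (2 * (T - t) + 1)"
  have L: "1 + c\<^sup>2 / 2 > 0" "2 * (T - t) + 1 > 0" using t by (simp_all add: add_pos_nonneg)
  then have \<epsilon>': "\<epsilon> / L > 0" "(1 + c\<^sup>2 / 2) * (\<epsilon> / L) * (2 * (T - t) + 1) = \<epsilon>"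
    using \<epsilon> unfolding L_def by simp_all
  obtain \<eta> \<rho> where \<eta>\<rho>: "\<eta> > 0" "\<rho> > 0"
    and err: "\<And>\<rho>1 x w s u. \<rho>1 \<le> \<rho> \<Longrightarrow> controlled_path K \<rho>1 \<eta> x w \<Longrightarrow> 0 \<le> s \<Longrightarrow> s \<le> u \<Longrightarrow> u \<le> T \<Longrightarrow>
       u - s < \<rho>1 \<Longrightarrow> cmod (local_error x w s u) \<le> \<epsilon> / L * ((u - s) + (w u - w s)\<^sup>2)"
    and weight: "\<And>\<rho>1 x w v v'. \<rho>1 \<le> \<rho> \<Longrightarrow> controlled_path K \<rho>1 \<eta> x w \<Longrightarrow> v \<in> {0..T} \<Longrightarrow> v' \<in> {0..T} \<Longrightarrow>
       \<bar>v - v'\<bar> < \<rho>1 \<Longrightarrow> cmod (h v * f'' (x v) - h v' * f'' (x v')) \<le> \<epsilon> / L"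
    using controlled_path_local_estimates[OF K \<epsilon>'(1)] by blast
  obtain B where B: "B \<ge> 0" "\<And>v y. v \<in> {0..T} \<Longrightarrow> \<bar>y\<bar> \<le> K \<Longrightarrow>
      cmod (h' v) \<le> B \<and> cmod (h v) \<le> B \<and> cmod (f' y) \<le> B \<and> cmod (f'' y) \<le> B \<and> \<bar>a + b * y\<bar> \<le> B"
    using uniform_bounds[OF K] by blast
  show ?thesis
  proof (rule that[OF \<eta>\<rho>, of "c\<^sup>2 / 2 * (B * B)"])
    fix \<rho>1 x w \<tau> n m and \<kappa> :: "nat \<Rightarrow> nat" and \<sigma>
    assume \<rho>1: "\<rho>1 \<le> \<rho>" and C: "controlled_path K \<rho>1 \<eta> x w" and P: "is_partition \<tau> n t T"
      and mesh: "\<forall>i<n. \<tau> (Suc i) - \<tau> i < \<rho>1" and \<sigma>: "\<forall>k<m. \<sigma> k \<in> {0..T}"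
      and \<kappa>: "\<forall>i<n. \<kappa> i < m \<and> \<bar>\<tau> i - \<sigma> (\<kappa> i)\<bar> < \<rho>1"
    have xK: "\<forall>v\<in>{0..T}. \<bar>x v\<bar> \<le> K" and xc: "continuous_on {0..T} x"
      using C unfolding controlled_path_def sde_path_def by blast+
    have \<tau>T: "\<tau> i \<in> {0..T}" if "i \<le> n" for i using partition_range[OF P that] t by auto
    define q where "q = \<bar>\<Sum>i<n. qv_defect w \<tau> i\<bar>"
    define S where "S = (\<Sum>k<m. \<bar>\<Sum>i\<in>{i. i < n \<and> \<kappa> i = k}. qv_defect w \<tau> i\<bar>)"
    have "cmod (forward_sum x w \<tau> n - ito_target x t) \<le> (1 + c\<^sup>2 / 2) * (\<epsilon> / L) * (2 * (T - t) + q)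
        + c\<^sup>2 / 2 * (B * B * S)"
      unfolding q_def S_def
    proof (rule forward_sum_error_bound[OF xc t(1) P _ _ _ _ , where z = "\<lambda>k. h (\<sigma> k) * f'' (x (\<sigma> k))"])
      show "\<forall>i<n. cmod (local_error x w (\<tau> i) (\<tau> (Suc i)))
          \<le> \<epsilon> / L * ((\<tau> (Suc i) - \<tau> i) + (w (\<tau> (Suc i)) - w (\<tau> i))\<^sup>2)"
      proof (intro allI impI)
        fix i assume "i < n"
        then show "cmod (local_error x w (\<tau> i) (\<tau> (Suc i)))
            \<le> \<epsilon> / L * ((\<tau> (Suc i) - \<tau> i) + (w (\<tau> (Suc i)) - w (\<tau> i))\<^sup>2)"
          using P mesh \<tau>T[of i] \<tau>T[of "Suc i"]
          by (intro err[OF \<rho>1 C]) (auto simp: is_partition_def less_imp_le)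
      qed
      show "\<forall>i<n. cmod (h (\<tau> i) * f'' (x (\<tau> i)) - h (\<sigma> (\<kappa> i)) * f'' (x (\<sigma> (\<kappa> i)))) \<le> \<epsilon> / L"
        using \<kappa> \<sigma> \<tau>T by (auto intro!: weight[OF \<rho>1 C])
      show "\<forall>k<m. cmod (h (\<sigma> k) * f'' (x (\<sigma> k))) \<le> B * B"
      proof (intro allI impI)
        fix k assume "k < m"
        then have "\<sigma> k \<in> {0..T}" "\<bar>x (\<sigma> k)\<bar> \<le> K" using \<sigma> xK by auto
        then show "cmod (h (\<sigma> k) * f'' (x (\<sigma> k))) \<le> B * B"
          using B(2)[of "\<sigma> k" "x (\<sigma> k)"] B(1) unfolding norm_mult by (intro mult_mono) auto
      qed
    qed (use \<epsilon>'(1) \<kappa> in auto)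
    also have "\<dots> \<le> \<epsilon> * (1 + q) + c\<^sup>2 / 2 * (B * B) * S"
    proof -
      have "(1 + c\<^sup>2 / 2) * (\<epsilon> / L) * (2 * (T - t) + q)
          \<le> (1 + c\<^sup>2 / 2) * (\<epsilon> / L) * ((2 * (T - t) + 1) * (1 + q))"
      proof (rule mult_left_mono)
        have "0 \<le> (T - t) * q" using t by (simp add: q_def)
        then show "2 * (T - t) + q \<le> (2 * (T - t) + 1) * (1 + q)"
          by (simp add: algebra_simps)
        show "0 \<le> (1 + c\<^sup>2 / 2) * (\<epsilon> / L)"
          using mult_pos_pos[OF L(1) \<epsilon>'(1)] by (rule less_imp_le)
      qed
      also have "\<dots> = \<epsilon> * (1 + q)" using \<epsilon>'(2) by (simp add: mult.assoc[symmetric])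
      finally show ?thesis by simp
    qed
    finally show "cmod (forward_sum x w \<tau> n - ito_target x t) \<le> \<epsilon> * (1 + q) + c\<^sup>2 / 2 * (B * B) * S" .
  qed simp
qed

lemma controlled_path_from_rationals:
  assumes sde: "sde_path x w" and w: "continuous_on {0..T} w" and "K0 \<le> K"
    and bnd: "\<forall>s\<in>{0..T} \<inter> \<rat>. \<bar>x s\<bar> \<le> K0"
    and osc: "\<forall>s\<in>{0..T} \<inter> \<rat>. \<forall>s'\<in>{0..T} \<inter> \<rat>. \<bar>s - s'\<bar> \<le> \<rho>' \<longrightarrow> \<bar>w s - w s'\<bar> \<le> \<eta>"
    and "\<rho> \<le> \<rho>'"
  shows "controlled_path K \<rho> \<eta> x w"
  unfolding controlled_path_def
proof (intro conjI ballI impI sde)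
  have "continuous_on {0..T} x" using sde by (simp add: sde_path_def)
  then show "\<bar>x v\<bar> \<le> K" if "v \<in> {0..T}" for v
    using continuous_on_bound_from_rationals[OF T_pos _ bnd] \<open>K0 \<le> K\<close> that by force
  show "\<bar>w v - w v'\<bar> \<le> \<eta>" if "v \<in> {0..T}" "v' \<in> {0..T}" "\<bar>v - v'\<bar> < \<rho>" for v v'
    using continuous_on_oscillation_from_rationals[OF T_pos w osc] that \<open>\<rho> \<le> \<rho>'\<close> by auto
qed

lemma forward_sum_error_small:
  assumes BM: "brownian_motion M W" and X_meas: "\<forall>s\<in>{0..T}. X s \<in> borel_measurable M"
    and sde: "\<forall>\<omega>\<in>space M. sde_path (\<lambda>s. X s \<omega>) (\<lambda>s. W s \<omega>)"
    and t: "0 \<le> t" "t < T" and \<epsilon>: "\<epsilon> > 0"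
  obtains \<delta> where "\<delta> > 0" "\<And>\<tau> n. is_partition \<tau> n t T \<Longrightarrow> \<forall>i<n. \<tau> (Suc i) - \<tau> i < \<delta> \<Longrightarrow>
    measure M {\<omega>\<in>space M. \<epsilon> \<le> cmod (forward_sum (\<lambda>s. X s \<omega>) (\<lambda>s. W s \<omega>) \<tau> n - ito_target (\<lambda>s. X s \<omega>) t)}
      \<le> \<epsilon>"
proof -
  interpret prob_space M using BM by (simp add: brownian_motion_def)
  have W_meas: "\<forall>s\<in>{0..T}. W s \<in> borel_measurable M"
    and W_cont: "\<forall>\<omega>\<in>space M. continuous_on {0..T} (\<lambda>s. W s \<omega>)"
    using BM by (auto simp: brownian_motion_def intro: continuous_on_subset)
  have X_cont: "\<forall>\<omega>\<in>space M. continuous_on {0..T} (\<lambda>s. X s \<omega>)" using sde by (simp add: sde_path_def)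
  have \<epsilon>4: "\<epsilon> / 4 > 0" using \<epsilon> by simp
  define B1 where "B1 = (\<lambda>K. {\<omega>\<in>space M. \<exists>s\<in>{0..T} \<inter> \<rat>. K < \<bar>X s \<omega>\<bar>})"
  obtain K0 where B1: "B1 K0 \<in> sets M" "measure M (B1 K0) \<le> \<epsilon> / 4"
    using continuous_process_bound_event[OF X_meas X_cont \<epsilon>4] unfolding B1_def by blast
  define K where "K = max K0 0"
  have K: "K \<ge> 0" "K0 \<le> K" by (simp_all add: K_def)
  obtain \<eta> \<rho> G where \<eta>\<rho>G: "\<eta> > 0" "\<rho> > 0" "G \<ge> 0"
    and bound: "\<And>\<rho>1 x w \<tau> n m (\<kappa> :: nat \<Rightarrow> nat) \<sigma>. \<rho>1 \<le> \<rho> \<Longrightarrow> controlled_path K \<rho>1 \<eta> x w \<Longrightarrow>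
       is_partition \<tau> n t T \<Longrightarrow> \<forall>i<n. \<tau> (Suc i) - \<tau> i < \<rho>1 \<Longrightarrow> \<forall>k<m. \<sigma> k \<in> {0..T} \<Longrightarrow>
       \<forall>i<n. \<kappa> i < m \<and> \<bar>\<tau> i - \<sigma> (\<kappa> i)\<bar> < \<rho>1 \<Longrightarrow>
       cmod (forward_sum x w \<tau> n - ito_target x t)
         \<le> \<epsilon> / 4 * (1 + \<bar>\<Sum>i<n. qv_defect w \<tau> i\<bar>)
           + G * (\<Sum>k<m. \<bar>\<Sum>i\<in>{i. i < n \<and> \<kappa> i = k}. qv_defect w \<tau> i\<bar>)"
    using pathwise_error_bound[OF K(1) t(1) less_imp_le[OF t(2)] \<epsilon>4] by blast
  define B2 where "B2 = (\<lambda>\<rho>. {\<omega>\<in>space M. \<exists>s\<in>{0..T} \<inter> \<rat>. \<exists>s'\<in>{0..T} \<inter> \<rat>.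
      \<bar>s - s'\<bar> \<le> \<rho> \<and> \<eta> < \<bar>W s \<omega> - W s' \<omega>\<bar>})"
  obtain \<rho>' where "\<rho>' > 0" and B2: "B2 \<rho>' \<in> sets M" "measure M (B2 \<rho>') \<le> \<epsilon> / 4"
    using continuous_process_oscillation_event[OF W_meas W_cont \<epsilon>4 \<eta>\<rho>G(1)] unfolding B2_def by blast
  define \<rho>0 where "\<rho>0 = min \<rho> \<rho>'"
  have \<rho>0: "\<rho>0 > 0" "\<rho>0 \<le> \<rho>" "\<rho>0 \<le> \<rho>'" using \<eta>\<rho>G(2) \<open>\<rho>' > 0\<close> by (auto simp: \<rho>0_def)
  obtain m :: nat and \<sigma> \<kappa> where blocks: "m > 0" "\<forall>k<m. \<sigma> k \<in> {t..T}"
    "\<forall>s\<in>{t..<T}. \<kappa> s < m \<and> \<bar>s - \<sigma> (\<kappa> s)\<bar> < \<rho>0"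
    using uniform_blocks[OF t(2) \<rho>0(1)] by blast
  define \<theta> where "\<theta> = \<epsilon> / (4 * (G + 1) * m)"
  have \<theta>: "\<theta> > 0" using \<epsilon> \<eta>\<rho>G(3) blocks(1) by (simp add: \<theta>_def)
  have "real m * \<theta> = \<epsilon> / (4 * (G + 1))" using blocks(1) by (simp add: \<theta>_def)
  moreover have "G * (\<epsilon> / (4 * (G + 1))) < \<epsilon> / 4"
    using \<eta>\<rho>G(3) \<epsilon> by (simp add: pos_divide_less_eq)
  ultimately have G\<theta>: "G * (m * \<theta>) < \<epsilon> / 4" by simp
  define D where "D = (T - t) * (1 + m / \<theta>\<^sup>2)"
  have "D > 0" using t(2) \<theta> by (simp add: D_def add_pos_nonneg)
  define \<delta> where "\<delta> = min \<rho>0 (\<epsilon> / (16 * D))"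
  have \<delta>: "\<delta> > 0" "\<delta> \<le> \<rho>0" "2 * \<delta> * (T - t) * (1 + m / \<theta>\<^sup>2) \<le> \<epsilon> / 8"
  proof -
    show "\<delta> > 0" "\<delta> \<le> \<rho>0" using \<rho>0(1) \<epsilon> \<open>D > 0\<close> by (simp_all add: \<delta>_def)
    have "2 * \<delta> * D \<le> 2 * (\<epsilon> / (16 * D)) * D"
      using \<open>D > 0\<close> by (intro mult_right_mono) (auto simp: \<delta>_def)
    also have "\<dots> = \<epsilon> / 8" using \<open>D > 0\<close> by simp
    finally show "2 * \<delta> * (T - t) * (1 + m / \<theta>\<^sup>2) \<le> \<epsilon> / 8"
      by (simp add: D_def mult.assoc)
  qed
  show ?thesis
  proof (rule that[OF \<delta>(1)])
    fix \<tau> n assume P: "is_partition \<tau> n t T" and mesh: "\<forall>i<n. \<tau> (Suc i) - \<tau> i < \<delta>"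
    define B3 where "B3 = {\<omega>\<in>space M. 1 \<le> \<bar>\<Sum>i<n. qv_defect (\<lambda>s. W s \<omega>) \<tau> i\<bar>
      \<or> (\<exists>k<m. \<theta> \<le> \<bar>\<Sum>i\<in>{i. i < n \<and> \<kappa> (\<tau> i) = k}. qv_defect (\<lambda>s. W s \<omega>) \<tau> i\<bar>)}"
    have "\<forall>i<n. \<tau> (Suc i) - \<tau> i \<le> \<delta>" using mesh by (simp add: less_imp_le)
    note qv = brownian_qv_bad_event[where \<kappa> = "\<lambda>i. \<kappa> (\<tau> i)" and m = m, OF BM t(1) P this \<theta>(1)]
    have B3: "B3 \<in> sets M" "measure M B3 \<le> \<epsilon> / 8"
      using qv \<delta>(3) unfolding B3_def by auto
    have "{\<omega>\<in>space M. \<epsilon> \<le> cmod (forward_sum (\<lambda>s. X s \<omega>) (\<lambda>s. W s \<omega>) \<tau> n - ito_target (\<lambda>s. X s \<omega>) t)}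
        \<subseteq> B1 K0 \<union> B2 \<rho>' \<union> B3"
    proof (intro subsetI, rule ccontr)
      fix \<omega> assume "\<omega> \<in> {\<omega>\<in>space M. \<epsilon> \<le> cmod (forward_sum (\<lambda>s. X s \<omega>) (\<lambda>s. W s \<omega>) \<tau> n
          - ito_target (\<lambda>s. X s \<omega>) t)}" and "\<omega> \<notin> B1 K0 \<union> B2 \<rho>' \<union> B3"
      then have \<omega>: "\<omega> \<in> space M"
        and big: "\<epsilon> \<le> cmod (forward_sum (\<lambda>s. X s \<omega>) (\<lambda>s. W s \<omega>) \<tau> n - ito_target (\<lambda>s. X s \<omega>) t)"
        and good: "\<omega> \<notin> B1 K0" "\<omega> \<notin> B2 \<rho>'" "\<omega> \<notin> B3" by auto
      have nB1: "\<forall>s\<in>{0..T} \<inter> \<rat>. \<bar>X s \<omega>\<bar> \<le> K0"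
        using good(1) \<omega> by (simp add: B1_def not_less)
      have nB2: "\<forall>s\<in>{0..T} \<inter> \<rat>. \<forall>s'\<in>{0..T} \<inter> \<rat>. \<bar>s - s'\<bar> \<le> \<rho>' \<longrightarrow> \<bar>W s \<omega> - W s' \<omega>\<bar> \<le> \<eta>"
        using good(2) \<omega> by (simp add: B2_def not_less)
      have nB3: "\<bar>\<Sum>i<n. qv_defect (\<lambda>s. W s \<omega>) \<tau> i\<bar> < 1"
          "\<forall>k<m. \<bar>\<Sum>i\<in>{i. i < n \<and> \<kappa> (\<tau> i) = k}. qv_defect (\<lambda>s. W s \<omega>) \<tau> i\<bar> < \<theta>"
        using good(3) \<omega> by (simp_all add: B3_def not_le)
      have "controlled_path K \<rho>0 \<eta> (\<lambda>s. X s \<omega>) (\<lambda>s. W s \<omega>)"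
        using sde W_cont \<omega> by (intro controlled_path_from_rationals[OF _ _ K(2) nB1 nB2 \<rho>0(3)]) auto
      moreover have "\<tau> i \<in> {t..<T}" if "i < n" for i
        using partition_range[OF P, of i] partition_range[OF P, of "Suc i"] P that
        by (auto simp: is_partition_def)
      ultimately have "cmod (forward_sum (\<lambda>s. X s \<omega>) (\<lambda>s. W s \<omega>) \<tau> n - ito_target (\<lambda>s. X s \<omega>) t)
          \<le> \<epsilon> / 4 * (1 + \<bar>\<Sum>i<n. qv_defect (\<lambda>s. W s \<omega>) \<tau> i\<bar>)
            + G * (\<Sum>k<m. \<bar>\<Sum>i\<in>{i. i < n \<and> \<kappa> (\<tau> i) = k}. qv_defect (\<lambda>s. W s \<omega>) \<tau> i\<bar>)"
        using mesh \<delta>(2) blocks t(1)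
        by (intro bound[of \<rho>0 _ _ \<tau> n m \<sigma> "\<lambda>i. \<kappa> (\<tau> i)"] \<rho>0(2) P) auto
      also have "\<dots> \<le> \<epsilon> / 4 * 2 + G * (\<Sum>k<m. \<theta>)"
        using nB3 \<epsilon> \<eta>\<rho>G(3) by (intro add_mono mult_left_mono sum_mono) (auto simp: less_imp_le)
      also have "\<dots> = \<epsilon> / 2 + G * (m * \<theta>)" by simp
      also have "\<dots> < \<epsilon>" using G\<theta> \<epsilon> by linarith
      finally show False using big by simp
    qed
    then have "measure M {\<omega>\<in>space M. \<epsilon> \<le> cmod (forward_sum (\<lambda>s. X s \<omega>) (\<lambda>s. W s \<omega>) \<tau> n
        - ito_target (\<lambda>s. X s \<omega>) t)} \<le> measure M (B1 K0 \<union> B2 \<rho>' \<union> B3)"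
      using B1 B2 B3 by (intro finite_measure_mono) auto
    also have "\<dots> \<le> measure M (B1 K0) + measure M (B2 \<rho>') + measure M B3"
      using B1 B2 B3 by (intro order_trans[OF measure_Un_le] add_mono order_refl measure_Un_le) auto
    also have "\<dots> \<le> \<epsilon>" using B1 B2 B3 \<epsilon> by linarith
    finally show "measure M {\<omega>\<in>space M. \<epsilon> \<le> cmod (forward_sum (\<lambda>s. X s \<omega>) (\<lambda>s. W s \<omega>) \<tau> n
        - ito_target (\<lambda>s. X s \<omega>) t)} \<le> \<epsilon>" .
  qed
qed

lemma sde_path_of_integral_equation:
  assumes xc: "continuous_on {0..T} x"
    and x: "\<forall>s\<in>{0..T}. x s = x0 + integral {0..s} (\<lambda>u. a + b * x u) + c * w s"
  shows "sde_path x w"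
  unfolding sde_path_def
proof (intro conjI xc ballI impI)
  fix s u assume s: "s \<in> {0..T}" and u: "u \<in> {0..T}" and "s \<le> u"
  have "(\<lambda>v. a + b * x v) integrable_on {0..u}"
    using u by (intro integrable_continuous_interval continuous_intros continuous_on_subset[OF xc]) auto
  then have "integral {0..s} (\<lambda>v. a + b * x v) + integral {s..u} (\<lambda>v. a + b * x v)
      = integral {0..u} (\<lambda>v. a + b * x v)"
    using s \<open>s \<le> u\<close> by (intro Henstock_Kurzweil_Integration.integral_combine) auto
  then show "x u - x s = integral {s..u} (\<lambda>v. a + b * x v) + c * (w u - w s)"
    using x s u by (simp add: algebra_simps)
qed

lemma has_ito_integral_expansion:
  assumes BM: "brownian_motion M W" and X_meas: "\<forall>s\<in>{0..T}. X s \<in> borel_measurable M"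
    and sde: "\<forall>\<omega>\<in>space M. sde_path (\<lambda>s. X s \<omega>) (\<lambda>s. W s \<omega>)" and t: "0 \<le> t" "t \<le> T"
  shows "has_ito_integral M W (\<lambda>s \<omega>. h s * (of_real c * f' (X s \<omega>))) t T (\<lambda>\<omega>. ito_target (\<lambda>s. X s \<omega>) t)"
  unfolding has_ito_integral_def
proof (intro conjI ballI allI impI)
  have X_meas': "X s \<in> borel_measurable M" if "s \<in> {t..T}" for s using X_meas t that by auto
  have comp_meas: "(\<lambda>\<omega>. f (X s \<omega>)) \<in> borel_measurable M" "(\<lambda>\<omega>. f' (X s \<omega>)) \<in> borel_measurable M"
    "(\<lambda>\<omega>. generator (X s \<omega>)) \<in> borel_measurable M" if "s \<in> {t..T}" for s
    using X_meas'[OF that] continuous_on_f[OF continuous_on_id] continuous_on_f'[OF continuous_on_id]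
      continuous_on_generator[OF continuous_on_id]
    by (auto intro: borel_measurable_continuous_on)
  have "continuous_on {t..T} (\<lambda>s. h' s * f (X s \<omega>) + h s * generator (X s \<omega>))" if "\<omega> \<in> space M" for \<omega>
  proof -
    have "continuous_on {t..T} (\<lambda>s. X s \<omega>)"
      using sde that continuous_on_subset[of "{0..T}" _ "{t..T}"] t by (auto simp: sde_path_def)
    then show ?thesis using t by (intro continuous_intros) auto
  qed
  then have "(\<lambda>\<omega>. integral {t..T} (\<lambda>s. h' s * f (X s \<omega>) + h s * generator (X s \<omega>))) \<in> borel_measurable M"
    using t comp_meas
    by (intro borel_measurable_integral_continuous ballI borel_measurable_add borel_measurable_times
        borel_measurable_const) auto
  then show "(\<lambda>\<omega>. ito_target (\<lambda>s. X s \<omega>) t) \<in> borel_measurable M"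
    unfolding ito_target_def using t comp_meas
    by (intro borel_measurable_diff borel_measurable_times borel_measurable_const) auto
  show "(\<lambda>\<omega>. h s * (of_real c * f' (X s \<omega>))) \<in> borel_measurable M" if "s \<in> {t..T}" for s
    using comp_meas[OF that] by (intro borel_measurable_times borel_measurable_const)
next
  fix \<epsilon> :: real assume "\<epsilon> > 0"
  have sum_eq: "ito_sum W (\<lambda>s \<omega>. h s * (of_real c * f' (X s \<omega>))) \<tau> n \<omega>
      = forward_sum (\<lambda>s. X s \<omega>) (\<lambda>s. W s \<omega>) \<tau> n" for \<tau> n \<omega>
    by (simp add: ito_sum_def forward_sum_def)
  show "\<exists>\<delta>>0. \<forall>\<tau> n. is_partition \<tau> n t T \<and> (\<forall>i<n. \<tau> (Suc i) - \<tau> i < \<delta>) \<longrightarrow>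
      measure M {\<omega>\<in>space M. \<epsilon> \<le> cmod (ito_sum W (\<lambda>s \<omega>. h s * (of_real c * f' (X s \<omega>))) \<tau> n \<omega>
        - ito_target (\<lambda>s. X s \<omega>) t)} \<le> \<epsilon>"
  proof (cases "t = T")
    case True
    show ?thesis
    proof (intro exI[of _ 1] conjI allI impI)
      fix \<tau> n assume "is_partition \<tau> n t T \<and> (\<forall>i<n. \<tau> (Suc i) - \<tau> i < 1)"
      then have "n = 0"
        using partition_le[of n \<tau> 1 n] True by (cases n) (auto simp: is_partition_def)
      then show "measure M {\<omega>\<in>space M. \<epsilon> \<le> cmod (ito_sum W (\<lambda>s \<omega>. h s * (of_real c * f' (X s \<omega>))) \<tau> n \<omega>
          - ito_target (\<lambda>s. X s \<omega>) t)} \<le> \<epsilon>"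
        using \<open>\<epsilon> > 0\<close> True by (simp add: ito_sum_def ito_target_def)
    qed simp
  next
    case False
    then have "t < T" using t(2) by simp
    obtain \<delta> where "\<delta> > 0" "\<And>\<tau> n. is_partition \<tau> n t T \<Longrightarrow> \<forall>i<n. \<tau> (Suc i) - \<tau> i < \<delta> \<Longrightarrow>
        measure M {\<omega>\<in>space M. \<epsilon> \<le> cmod (forward_sum (\<lambda>s. X s \<omega>) (\<lambda>s. W s \<omega>) \<tau> n
          - ito_target (\<lambda>s. X s \<omega>) t)} \<le> \<epsilon>"
      using forward_sum_error_small[OF BM X_meas sde t(1) \<open>t < T\<close> \<open>\<epsilon> > 0\<close>] by blast
    then show ?thesis unfolding sum_eq by (intro exI[of _ \<delta>]) auto
  qed
qed

end

section \<open>Power series integrands\<close>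

lemma ito_expansion_pseries:
  assumes rad: "conv_radius \<alpha> = \<infinity>" and "T > 0"
    and "\<forall>s\<in>{0..T}. (h has_vector_derivative h' s) (at s within {0..T})" and "continuous_on {0..T} h'"
  shows "ito_expansion T h h' (\<lambda>y. k * pseries (antideriv_coeffs \<alpha>) y) (\<lambda>y. k * pseries \<alpha> y)
           (\<lambda>y. k * pseries (diffs \<alpha>) y)"
proof
  show "((\<lambda>y. k * pseries (antideriv_coeffs \<alpha>) y) has_vector_derivative k * pseries \<alpha> y) (at y)"
    "((\<lambda>y. k * pseries \<alpha> y) has_vector_derivative k * pseries (diffs \<alpha>) y) (at y)" for y
    using has_vector_derivative_pseries[OF conv_radius_antideriv_coeffs[OF rad]] has_vector_derivative_pseries[OF rad]
    by (auto intro!: has_vector_derivative_mult_right simp: diffs_antideriv_coeffs)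
  show "continuous_on UNIV (\<lambda>y. k * pseries (diffs \<alpha>) y)"
    by (intro continuous_intros continuous_on_pseries conv_radius_diffs_infinite rad)
qed (use assms in auto)

theorem lemmaA1:
  fixes M :: "'a measure" and W X :: "real \<Rightarrow> 'a \<Rightarrow> real"
    and a b c X0 T t :: real and \<alpha> :: "nat \<Rightarrow> complex" and h h' :: "real \<Rightarrow> complex"
    and p r1 r2 :: "real \<Rightarrow> complex"
  assumes BM: "brownian_motion M W"
    and c: "c \<noteq> 0" and T: "T > 0"
    and X_meas: "\<forall>s\<in>{0..T}. X s \<in> borel_measurable M"
    and X_cont: "\<forall>\<omega>\<in>space M. continuous_on {0..T} (\<lambda>s. X s \<omega>)"
    and X_sde: "\<forall>\<omega>\<in>space M. \<forall>s\<in>{0..T}.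
                  X s \<omega> = X0 + integral {0..s} (\<lambda>u. a + b * X u \<omega>) + c * W s \<omega>"
    and rad: "conv_radius \<alpha> = \<infinity>"
    and p_def: "p = pseries \<alpha>"
    and r1_def: "\<And>x. r1 x = - (1 / complex_of_real c) *
                   (complex_of_real (a + b * x) * p x
                    + complex_of_real (c\<^sup>2 / 2) * vector_derivative p (at x))"
    and r2_def: "\<And>x. r2 x = (1 / complex_of_real c) *
                   interval_lebesgue_integral lborel (ereal 0) (ereal x) p"
    and h_deriv: "\<forall>s\<in>{0..T}. (h has_vector_derivative h' s) (at s within {0..T})"
    and h'_cont: "continuous_on {0..T} h'"
    and t: "0 \<le> t" "t \<le> T"
  shows "(\<exists>\<beta>. conv_radius \<beta> = \<infinity> \<and> r1 = pseries \<beta>)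
       \<and> (\<exists>\<beta>. conv_radius \<beta> = \<infinity> \<and> r2 = pseries \<beta>)
       \<and> has_ito_integral M W (\<lambda>s \<omega>. h s * p (X s \<omega>)) t T
           (\<lambda>\<omega>. integral {t..T} (\<lambda>s. h s * r1 (X s \<omega>) - h' s * r2 (X s \<omega>))
                 + h T * r2 (X T \<omega>) - h t * r2 (X t \<omega>))"
proof -
  define k where "k = 1 / complex_of_real c"
  have r1_eq: "r1 = (\<lambda>y. - k * (of_real (a + b * y) * pseries \<alpha> y + of_real (c\<^sup>2 / 2) * pseries (diffs \<alpha>) y))"
    using r1_def by (auto simp: k_def p_def vector_derivative_pseries[OF rad])
  have r2_eq: "r2 = (\<lambda>y. k * pseries (antideriv_coeffs \<alpha>) y)"
    using r2_def by (auto simp: k_def p_def interval_integral_pseries[OF rad])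
  interpret E: ito_expansion a b c T h h' r2 "\<lambda>y. k * p y" "\<lambda>y. k * pseries (diffs \<alpha>) y"
    unfolding r2_eq p_def by (rule ito_expansion_pseries[OF rad T h_deriv h'_cont])
  have r1_gen: "r1 = (\<lambda>y. - E.generator y)"
    unfolding r1_eq E.generator_def unfolding fun_eq_iff k_def p_def using c
    by (simp add: field_simps power2_eq_square)
  have "has_ito_integral M W (\<lambda>s \<omega>. h s * (of_real c * (k * p (X s \<omega>)))) t T (\<lambda>\<omega>. E.ito_target (\<lambda>s. X s \<omega>) t)"
    using X_cont X_sde
    by (intro E.has_ito_integral_expansion[OF BM X_meas _ t] ballI E.sde_path_of_integral_equation) auto
  moreover have "of_real c * (k * z) = z" for z using c by (simp add: k_def)
  moreover have "\<exists>\<beta>. conv_radius \<beta> = \<infinity> \<and> r1 = pseries \<beta>"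
  proof -
    obtain \<beta> where \<beta>: "conv_radius \<beta> = \<infinity>" "(\<lambda>y. of_real (a + b * y) * pseries \<alpha> y
        + of_real (c\<^sup>2 / 2) * pseries (diffs \<alpha>) y) = pseries \<beta>"
      using entire_pseries_affine_diffs[OF rad] by blast
    have "r1 = (\<lambda>y. - k * pseries \<beta> y)" unfolding r1_eq \<beta>(2)[symmetric] by simp
    then show ?thesis using entire_pseries_cmult[OF \<beta>(1), of "- k"] by simp
  qed
  moreover have "\<exists>\<beta>. conv_radius \<beta> = \<infinity> \<and> r2 = pseries \<beta>"
    unfolding r2_eq by (rule entire_pseries_cmult[OF conv_radius_antideriv_coeffs[OF rad]])
  ultimately show ?thesis by (simp add: E.ito_target_eq r1_gen)
qed

end
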